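(* Let $U,U'\in\mathcal G$ be distant, let $\lambda:U\to U'$ be a $K$-linear isomorphism, and let $R=\operatorname{End}_K(U)$. For $(x,y)\in Z^2\setminus\{(0,0)\}$ put $T^{(x,y)}:=\{xu+yu^\lambda\mid u\in U\}$. Then the set $\{T^{(x,y)}\mid (x,y)\in Z^2\setminus\{(0,0)\}\}$ is, on the one hand, the image under $\Phi$ of a $Z$-chain of $\mathbb P(R)$ and, on the other hand, a $Z$-regulus.
   Context: $K$ is a (not necessarily commutative) field with centre $Z$, and $V$ is a left vector space over $K$ of arbitrary (possibly infinite) dimension with $\dim V>2$. $\mathcal G:=\{X\le V\mid X\cong V/X\}$, assumed nonempty. Points are $1$-dimensional and lines $2$-dimensional subspaces; two subspaces meet if they have a common point. $X,Y\in\mathcal G$ are distant if $V=X\oplus Y$. A $Z$-regulus is a subset $\mathcal R\subseteq\mathcal G$ such that (R1) its elements are mutually distant and $|\mathcal R|\ge3$; (R2) if a line meets three mutually distinct elements of $\mathcal R$ then it meets all elements of $\mathcal R$; (R3) $\mathcal R$ is not properly contained in any subset of $\mathcal G$ satisfying (R1) and (R2). Maps are written as exponents on the right, $u^{\beta\lambda}=(u^\beta)^\lambda$. For a ring $S$ with $1$, $\mathrm{GL}(2,S)$ acts on the free left module $S^2$ (row vectors, multiplied by matrices on the right) and on its submodules; the projective line $\mathbb P(S)$ is the orbit of $S(1,0)$ under $\mathrm{GL}(2,S)$. With $R=\operatorname{End}_K(U)$, the field $Z$ is embedded in $R$ via $a\mapsto a\cdot\mathrm{id}_U$; this yields an embedding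 $\mathbb P(Z)\to\mathbb P(R)$, $Z(x,y)\mapsto R(x\cdot\mathrm{id},y\cdot\mathrm{id})$, and the $Z$-chains of $\mathbb P(R)$ are the images of (the embedded) $\mathbb P(Z)$ under $\mathrm{GL}(2,R)$. The map $\Phi:\mathbb P(R)\to\mathcal G$, $R(\alpha,\beta)\mapsto\{u^\alpha+u^{\beta\lambda}\mid u\in U\}$, is a well-defined bijection. *)

theory Defs
  imports Main
begin

(* K is a division ring (type class division_ring), V is a type 'v with an additive
   group structure and a left scalar multiplication sc :: 'k => 'v => 'v.  The whole
   space V is UNIV :: 'v set. *)

definition centre :: "'k::ring_1 set" where
  "centre = {z. \<forall>a. z * a = a * z}"

definition left_vs :: "('k::division_ring \<Rightarrow> 'v::ab_group_add \<Rightarrow> 'v) \<Rightarrow> bool" where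
  "left_vs sc \<longleftrightarrow>
     (\<forall>a x y. sc a (x + y) = sc a x + sc a y) \<and>
     (\<forall>a b x. sc (a + b) x = sc a x + sc b x) \<and>
     (\<forall>a b x. sc a (sc b x) = sc (a * b) x) \<and>
     (\<forall>x. sc 1 x = x)"

definition lsubspace :: "('k \<Rightarrow> 'v::ab_group_add \<Rightarrow> 'v) \<Rightarrow> 'v set \<Rightarrow> bool" where
  "lsubspace sc X \<longleftrightarrow> 0 \<in> X \<and> (\<forall>x\<in>X. \<forall>y\<in>X. x + y \<in> X) \<and> (\<forall>a. \<forall>x\<in>X. sc a x \<in> X)"

definition lspan :: "('k \<Rightarrow> 'v::ab_group_add \<Rightarrow> 'v) \<Rightarrow> 'v set \<Rightarrow> 'v set" where
  "lspan sc A = \<Inter>{W. lsubspace sc W \<and> A \<subseteq> W}"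

definition lindep_free :: "('k \<Rightarrow> 'v::ab_group_add \<Rightarrow> 'v) \<Rightarrow> 'v set \<Rightarrow> bool" where
  "lindep_free sc S \<longleftrightarrow> (\<forall>v\<in>S. v \<notin> lspan sc (S - {v}))"

definition dim_gt2 :: "('k \<Rightarrow> 'v::ab_group_add \<Rightarrow> 'v) \<Rightarrow> bool" where
  "dim_gt2 sc \<longleftrightarrow> (\<exists>S. finite S \<and> card S = 3 \<and> lindep_free sc S)"

definition linear_on :: "('k \<Rightarrow> 'v::ab_group_add \<Rightarrow> 'v) \<Rightarrow> 'v set \<Rightarrow> ('v \<Rightarrow> 'v) \<Rightarrow> bool" where
  "linear_on sc X f \<longleftrightarrow> (\<forall>x\<in>X. \<forall>y\<in>X. f (x + y) = f x + f y) \<and> (\<forall>a. \<forall>x\<in>X. f (sc a x) = sc a (f x))"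

text \<open>X is isomorphic to V/X: there is a linear map of V onto X with kernel X
  (first isomorphism theorem).\<close>
definition iso_quot :: "('k \<Rightarrow> 'v::ab_group_add \<Rightarrow> 'v) \<Rightarrow> 'v set \<Rightarrow> bool" where
  "iso_quot sc X \<longleftrightarrow> lsubspace sc X \<and>
     (\<exists>f. linear_on sc UNIV f \<and> range f = X \<and> {v. f v = 0} = X)"

definition Gset :: "('k \<Rightarrow> 'v::ab_group_add \<Rightarrow> 'v) \<Rightarrow> 'v set set" where
  "Gset sc = {X. iso_quot sc X}"

definition points :: "('k \<Rightarrow> 'v::ab_group_add \<Rightarrow> 'v) \<Rightarrow> 'v set set" where
  "points sc = {lspan sc {v} | v. v \<noteq> 0}"

definition lines :: "('k \<Rightarrow> 'v::ab_group_add \<Rightarrow> 'v) \<Rightarrow> 'v set set" where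
  "lines sc = {lspan sc {v, w} | v w. v \<noteq> w \<and> lindep_free sc {v, w}}"

definition meets :: "('k \<Rightarrow> 'v::ab_group_add \<Rightarrow> 'v) \<Rightarrow> 'v set \<Rightarrow> 'v set \<Rightarrow> bool" where
  "meets sc X Y \<longleftrightarrow> (\<exists>P\<in>points sc. P \<subseteq> X \<and> P \<subseteq> Y)"

definition distant :: "('k \<Rightarrow> 'v::ab_group_add \<Rightarrow> 'v) \<Rightarrow> 'v set \<Rightarrow> 'v set \<Rightarrow> bool" where
  "distant sc X Y \<longleftrightarrow> (\<forall>v. \<exists>x\<in>X. \<exists>y\<in>Y. v = x + y) \<and> X \<inter> Y = {0}"

definition R1 :: "('k \<Rightarrow> 'v::ab_group_add \<Rightarrow> 'v) \<Rightarrow> 'v set set \<Rightarrow> bool" where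
  "R1 sc \<R> \<longleftrightarrow> (\<forall>X\<in>\<R>. \<forall>Y\<in>\<R>. X \<noteq> Y \<longrightarrow> distant sc X Y) \<and>
     (\<exists>A\<in>\<R>. \<exists>B\<in>\<R>. \<exists>C\<in>\<R>. A \<noteq> B \<and> A \<noteq> C \<and> B \<noteq> C)"

definition R2 :: "('k \<Rightarrow> 'v::ab_group_add \<Rightarrow> 'v) \<Rightarrow> 'v set set \<Rightarrow> bool" where
  "R2 sc \<R> \<longleftrightarrow> (\<forall>L\<in>lines sc.
     (\<exists>A\<in>\<R>. \<exists>B\<in>\<R>. \<exists>C\<in>\<R>. A \<noteq> B \<and> A \<noteq> C \<and> B \<noteq> C \<and>
         meets sc L A \<and> meets sc L B \<and> meets sc L C)
     \<longrightarrow> (\<forall>X\<in>\<R>. meets sc L X))"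

definition Z_regulus :: "('k \<Rightarrow> 'v::ab_group_add \<Rightarrow> 'v) \<Rightarrow> 'v set set \<Rightarrow> bool" where
  "Z_regulus sc \<R> \<longleftrightarrow> \<R> \<subseteq> Gset sc \<and> R1 sc \<R> \<and> R2 sc \<R> \<and>
     \<not> (\<exists>\<S>. \<R> \<subset> \<S> \<and> \<S> \<subseteq> Gset sc \<and> R1 sc \<S> \<and> R2 sc \<S>)"

text \<open>Endomorphisms of U are represented as functions on V that vanish outside U.
  Maps are written on the right: the product f g in R means "first f, then g".\<close>

definition End :: "('k \<Rightarrow> 'v::ab_group_add \<Rightarrow> 'v) \<Rightarrow> 'v set \<Rightarrow> ('v \<Rightarrow> 'v) set" where
  "End sc U = {f. linear_on sc U f \<and> f ` U \<subseteq> U \<and> (\<forall>v. v \<notin> U \<longrightarrow> f v = 0)}"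

definition rmul :: "('v \<Rightarrow> 'v) \<Rightarrow> ('v \<Rightarrow> 'v) \<Rightarrow> ('v \<Rightarrow> 'v)" where
  "rmul f g = g \<circ> f"

definition radd :: "('v \<Rightarrow> 'v) \<Rightarrow> ('v \<Rightarrow> 'v) \<Rightarrow> ('v::ab_group_add \<Rightarrow> 'v)" where
  "radd f g = (\<lambda>v. f v + g v)"

definition rzero :: "'v \<Rightarrow> 'v::ab_group_add" where
  "rzero = (\<lambda>v. 0)"

definition rid :: "'v set \<Rightarrow> 'v \<Rightarrow> 'v::ab_group_add" where
  "rid U = (\<lambda>v. if v \<in> U then v else 0)"

text \<open>The embedding of Z in R: a \<mapsto> a * id_U.\<close>
definition rscal :: "('k \<Rightarrow> 'v::ab_group_add \<Rightarrow> 'v) \<Rightarrow> 'v set \<Rightarrow> 'k \<Rightarrow> 'v \<Rightarrow> 'v" where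
  "rscal sc U a = (\<lambda>v. if v \<in> U then sc a v else 0)"

text \<open>2x2 matrices as pairs of rows ((a,b),(c,d)); row vectors are multiplied on the right.\<close>
definition rowmulR :: "('v \<Rightarrow> 'v) \<times> ('v \<Rightarrow> 'v) \<Rightarrow> (('v \<Rightarrow> 'v) \<times> ('v \<Rightarrow> 'v)) \<times> (('v \<Rightarrow> 'v) \<times> ('v \<Rightarrow> 'v))
     \<Rightarrow> ('v::ab_group_add \<Rightarrow> 'v) \<times> ('v \<Rightarrow> 'v)" where
  "rowmulR p M = (radd (rmul (fst p) (fst (fst M))) (rmul (snd p) (fst (snd M))),
                  radd (rmul (fst p) (snd (fst M))) (rmul (snd p) (snd (snd M))))"

definition matmulR where
  "matmulR M N = (rowmulR (fst M) N, rowmulR (snd M) N)"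

definition mat_entries :: "('a \<times> 'a) \<times> ('a \<times> 'a) \<Rightarrow> 'a set" where
  "mat_entries M = {fst (fst M), snd (fst M), fst (snd M), snd (snd M)}"

definition GL2R :: "('k \<Rightarrow> 'v::ab_group_add \<Rightarrow> 'v) \<Rightarrow> 'v set
     \<Rightarrow> ((('v \<Rightarrow> 'v) \<times> ('v \<Rightarrow> 'v)) \<times> (('v \<Rightarrow> 'v) \<times> ('v \<Rightarrow> 'v))) set" where
  "GL2R sc U = {M. mat_entries M \<subseteq> End sc U \<and>
     (\<exists>N. mat_entries N \<subseteq> End sc U \<and>
          matmulR M N = ((rid U, rzero), (rzero, rid U)) \<and>
          matmulR N M = ((rid U, rzero), (rzero, rid U)))}"

definition actR where
  "actR M S = (\<lambda>p. rowmulR p M) ` S"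

definition Rsub :: "('k \<Rightarrow> 'v::ab_group_add \<Rightarrow> 'v) \<Rightarrow> 'v set \<Rightarrow> ('v \<Rightarrow> 'v) \<Rightarrow> ('v \<Rightarrow> 'v)
     \<Rightarrow> (('v \<Rightarrow> 'v) \<times> ('v \<Rightarrow> 'v)) set" where
  "Rsub sc U a b = {(rmul \<rho> a, rmul \<rho> b) | \<rho>. \<rho> \<in> End sc U}"

definition projR where
  "projR sc U = {actR M (Rsub sc U (rid U) rzero) | M. M \<in> GL2R sc U}"

definition rowmulK :: "'k \<times> 'k \<Rightarrow> ('k \<times> 'k) \<times> ('k \<times> 'k) \<Rightarrow> 'k::ring_1 \<times> 'k" where
  "rowmulK p M = (fst p * fst (fst M) + snd p * fst (snd M),
                  fst p * snd (fst M) + snd p * snd (snd M))"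

definition matmulK where
  "matmulK M N = (rowmulK (fst M) N, rowmulK (snd M) N)"

definition GL2Z :: "(('k::ring_1 \<times> 'k) \<times> ('k \<times> 'k)) set" where
  "GL2Z = {M. mat_entries M \<subseteq> centre \<and>
     (\<exists>N. mat_entries N \<subseteq> centre \<and>
          matmulK M N = ((1, 0), (0, 1)) \<and> matmulK N M = ((1, 0), (0, 1)))}"

definition actK where
  "actK M S = (\<lambda>p. rowmulK p M) ` S"

definition Zsub :: "'k::ring_1 \<Rightarrow> 'k \<Rightarrow> ('k \<times> 'k) set" where
  "Zsub x y = {(z * x, z * y) | z. z \<in> centre}"

definition projZ :: "('k::ring_1 \<times> 'k) set set" where
  "projZ = {actK M (Zsub 1 0) | M. M \<in> GL2Z}"

definition embZ :: "('k::ring_1 \<Rightarrow> 'v::ab_group_add \<Rightarrow> 'v) \<Rightarrow> 'v set \<Rightarrow> (('v \<Rightarrow> 'v) \<times> ('v \<Rightarrow> 'v)) set set" where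
  "embZ sc U = {Rsub sc U (rscal sc U x) (rscal sc U y) | x y.
                  x \<in> centre \<and> y \<in> centre \<and> Zsub x y \<in> projZ}"

definition Zchains where
  "Zchains sc U = {actR M ` embZ sc U | M. M \<in> GL2R sc U}"

definition Phi :: "('k \<Rightarrow> 'v::ab_group_add \<Rightarrow> 'v) \<Rightarrow> 'v set \<Rightarrow> ('v \<Rightarrow> 'v)
     \<Rightarrow> (('v \<Rightarrow> 'v) \<times> ('v \<Rightarrow> 'v)) set \<Rightarrow> 'v set" where
  "Phi sc U lam P = (THE X. \<exists>\<alpha> \<beta>. \<alpha> \<in> End sc U \<and> \<beta> \<in> End sc U \<and> P = Rsub sc U \<alpha> \<beta> \<and>
        X = {\<alpha> u + lam (\<beta> u) | u. u \<in> U})"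

definition Tsub :: "('k \<Rightarrow> 'v::ab_group_add \<Rightarrow> 'v) \<Rightarrow> 'v set \<Rightarrow> ('v \<Rightarrow> 'v) \<Rightarrow> 'k \<Rightarrow> 'k \<Rightarrow> 'v set" where
  "Tsub sc U lam x y = {sc x u + sc y (lam u) | u. u \<in> U}"

end

theory Submission
  imports Defs
begin

text \<open>
  Every vector is uniquely \<open>p + q\<^sup>\<lambda>\<close> with \<open>p, q \<in> U\<close>, and in these coordinates
  \<open>T(x, y)\<close> consists of the pairs \<open>(xu, yu)\<close>. Because \<open>x, y\<close> are central, Cramer's rule
  applies: \<open>T(x, y)\<close> and \<open>T(x', y')\<close> are complementary when \<open>xy' - yx' \<noteq> 0\<close> and equal
  otherwise, and every \<open>T(x, y)\<close> is the image of \<open>U\<close> under a shear, hence lies in \<open>\<G>\<close>.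

  If a line meets three of them in the points over \<open>u1, u2, u3 \<in> U\<close>, comparing
  coordinates shows \<open>u2 \<in> K u1\<close>; so the line contains the points over \<open>u1\<close> of two of them
  and therefore those of every \<open>T(x, y)\<close>, which is (R2). For (R3), a subspace \<open>X\<close> that can
  be added is distant from \<open>U'\<close> and meets each line \<open>\<langle>a, a\<^sup>\<lambda>\<rangle>\<close> (which meets \<open>U\<close>,
  \<open>U'\<close> and \<open>T(1, 1)\<close>), so it contains some \<open>a + c\<^sub>a a\<^sup>\<lambda>\<close> for every \<open>a \<in> U\<close>. As
  \<open>dim U \<ge> 2\<close>, comparing independent vectors makes \<open>c\<^sub>a\<close> constant, and linearity makes it
  central; thus \<open>X = T(1, c)\<close> after all.

  The chain statement is a computation: \<open>\<Phi>(R(x id, y id)) = T(x, y)\<close>, and the points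
  \<open>R(x id, y id)\<close> of the embedded \<open>\<bbbP>(Z)\<close> are those with \<open>(x, y) \<noteq> (0, 0)\<close>.
\<close>

section \<open>The centre and linear equations over a division ring\<close>

lemma centre_commute: "z \<in> centre \<Longrightarrow> z * a = a * z"
  by (simp add: centre_def)

lemma centre_left_commute: "z \<in> centre \<Longrightarrow> a * (z * b) = z * (a * b)"
  by (metis centre_commute mult.assoc)

lemma zero_in_centre [simp]: "0 \<in> centre"
  and one_in_centre [simp]: "1 \<in> centre"
  by (simp_all add: centre_def)

lemma centre_add: "a \<in> centre \<Longrightarrow> b \<in> centre \<Longrightarrow> a + b \<in> centre"
  and centre_uminus: "a \<in> centre \<Longrightarrow> - a \<in> centre"
  and centre_diff: "a \<in> centre \<Longrightarrow> b \<in> centre \<Longrightarrow> a - b \<in> centre"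
  by (simp_all add: centre_def algebra_simps)

lemma centre_mult: "a \<in> centre \<Longrightarrow> b \<in> centre \<Longrightarrow> a * b \<in> centre"
proof -
  assume "a \<in> centre" "b \<in> centre"
  then have "a * b * c = c * (a * b)" for c
    by (metis centre_commute mult.assoc)
  then show ?thesis by (simp add: centre_def)
qed

lemma centre_inverse:
  fixes a :: "'k::division_ring"
  assumes "a \<in> centre"
  shows "inverse a \<in> centre"
proof (cases "a = 0")
  case False
  have "inverse a * b = b * inverse a" for b
  proof -
    have "inverse a * b = inverse a * (b * a) * inverse a"
      using False by (simp add: mult.assoc)
    also have "\<dots> = inverse a * (a * b) * inverse a"
      by (simp only: centre_commute[OF assms, of b])
    also have "\<dots> = b * inverse a"
      using False by (simp flip: mult.assoc)
    finally show ?thesis .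
  qed
  then show ?thesis by (simp add: centre_def)
qed simp

lemmas centre_closed = centre_add centre_uminus centre_diff centre_mult centre_inverse

lemma one_equation_two_unknowns:
  fixes a b :: "'k::division_ring"
  shows "\<exists>c d. (c, d) \<noteq> (0, 0) \<and> c * a + d * b = 0"
proof (cases "a = 0")
  case True
  then show ?thesis by (intro exI[of _ 1] exI[of _ 0]) simp
next
  case False
  then show ?thesis by (intro exI[of _ "- b * inverse a"] exI[of _ 1]) (simp add: mult.assoc)
qed

lemma two_equations_three_unknowns_pivot:
  fixes s1 s2 s3 t1 t2 t3 :: "'k::division_ring"
  assumes "s1 \<noteq> 0"
  shows "\<exists>c1 c2 c3. (c1, c2, c3) \<noteq> (0, 0, 0) \<and>
           c1 * s1 + c2 * s2 + c3 * s3 = 0 \<and> c1 * t1 + c2 * t2 + c3 * t3 = 0"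
proof -
  obtain c2 c3 where c: "(c2, c3) \<noteq> (0, 0)"
    "c2 * (t2 - s2 * inverse s1 * t1) + c3 * (t3 - s3 * inverse s1 * t1) = 0"
    using one_equation_two_unknowns by blast
  define c1 where "c1 = - (c2 * s2 + c3 * s3) * inverse s1"
  have "c1 * s1 + c2 * s2 + c3 * s3 = 0"
    using assms by (simp add: c1_def mult.assoc)
  moreover have "c1 * t1 + c2 * t2 + c3 * t3 =
      c2 * (t2 - s2 * inverse s1 * t1) + c3 * (t3 - s3 * inverse s1 * t1)"
    by (simp add: c1_def algebra_simps)
  ultimately show ?thesis
    using c by auto
qed

lemma two_equations_three_unknowns:
  fixes s1 s2 s3 t1 t2 t3 :: "'k::division_ring"
  shows "\<exists>c1 c2 c3. (c1, c2, c3) \<noteq> (0, 0, 0) \<and>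
           c1 * s1 + c2 * s2 + c3 * s3 = 0 \<and> c1 * t1 + c2 * t2 + c3 * t3 = 0"
proof -
  consider "s1 \<noteq> 0" | "s2 \<noteq> 0" | "s3 \<noteq> 0" | "s1 = 0" "s2 = 0" "s3 = 0"
    by blast
  then show ?thesis
  proof cases
    case 1
    then show ?thesis by (rule two_equations_three_unknowns_pivot)
  next
    case 2
    from two_equations_three_unknowns_pivot[OF 2, of s1 s3 t2 t1 t3]
    obtain c1 c2 c3 where "(c1, c2, c3) \<noteq> (0, 0, 0)"
      "c1 * s2 + c2 * s1 + c3 * s3 = 0" "c1 * t2 + c2 * t1 + c3 * t3 = 0"
      by blast
    then show ?thesis
      by (intro exI[of _ c2] exI[of _ c1] exI[of _ c3]) (auto simp: algebra_simps)
  next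
    case 3
    from two_equations_three_unknowns_pivot[OF 3, of s1 s2 t3 t1 t2]
    obtain c1 c2 c3 where "(c1, c2, c3) \<noteq> (0, 0, 0)"
      "c1 * s3 + c2 * s1 + c3 * s2 = 0" "c1 * t3 + c2 * t1 + c3 * t2 = 0"
      by blast
    then show ?thesis
      by (intro exI[of _ c2] exI[of _ c3] exI[of _ c1]) (auto simp: algebra_simps)
  next
    case 4
    obtain c1 c2 where "(c1, c2) \<noteq> (0, 0)" "c1 * t1 + c2 * t2 = 0"
      using one_equation_two_unknowns by blast
    then show ?thesis
      using 4 by (intro exI[of _ c1] exI[of _ c2] exI[of _ 0]) simp
  qed
qed

lemma central_cramer_scalar:
  fixes x1 y1 x2 y2 x y :: "'k::division_ring"
  assumes c: "x1 \<in> centre" "y1 \<in> centre" "x2 \<in> centre" "y2 \<in> centre" "x \<in> centre" "y \<in> centre"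
    and d: "x1 * y2 - y1 * x2 \<noteq> 0"
  shows "\<exists>a b. a * x1 + b * x2 = x \<and> a * y1 + b * y2 = y"
proof -
  define e where "e = inverse (x1 * y2 - y1 * x2)"
  have e: "e \<in> centre" "e * (x1 * y2 - y1 * x2) = 1"
    using c d by (simp_all add: e_def centre_closed)
  have "(x * y2 - y * x2) * e * x1 + (x1 * y - y1 * x) * e * x2 = x * (e * (x1 * y2 - y1 * x2))"
    "(x * y2 - y * x2) * e * y1 + (x1 * y - y1 * x) * e * y2 = y * (e * (x1 * y2 - y1 * x2))"
    using c e(1) by (simp_all add: algebra_simps centre_commute centre_left_commute)
  then show ?thesis
    unfolding e(2) by (intro exI conjI) simp_all
qed

section \<open>Left vector spaces\<close>

locale left_vector_space =
  fixes sc :: "'k::division_ring \<Rightarrow> 'v::ab_group_add \<Rightarrow> 'v"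
  assumes left_vs: "left_vs sc"
begin

lemma scale_right_distrib: "sc a (x + y) = sc a x + sc a y"
  and scale_left_distrib: "sc (a + b) x = sc a x + sc b x"
  and scale_scale: "sc a (sc b x) = sc (a * b) x"
  and scale_one [simp]: "sc 1 x = x"
  using left_vs by (simp_all add: left_vs_def)

lemma scale_zero_right [simp]: "sc a 0 = 0"
  using scale_right_distrib[of a 0 0] by simp

lemma scale_zero_left [simp]: "sc 0 x = 0"
  using scale_left_distrib[of 0 0 x] by simp

lemma scale_minus_right: "sc a (- x) = - sc a x"
  using scale_right_distrib[of a "- x" x] by (simp add: eq_neg_iff_add_eq_0)

lemma scale_minus_left: "sc (- a) x = - sc a x"
  using scale_left_distrib[of "- a" a x] by (simp add: eq_neg_iff_add_eq_0)

lemma scale_right_diff_distrib: "sc a (x - y) = sc a x - sc a y"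
  using scale_right_distrib[of a x "- y"] by (simp add: scale_minus_right)

lemma scale_left_diff_distrib: "sc (a - b) x = sc a x - sc b x"
  using scale_left_distrib[of a "- b" x] by (simp add: scale_minus_left)

lemma scale_inverse_cancel: "a \<noteq> 0 \<Longrightarrow> sc (inverse a) (sc a x) = x"
  and scale_cancel_inverse: "a \<noteq> 0 \<Longrightarrow> sc a (sc (inverse a) x) = x"
  by (simp_all add: scale_scale)

lemma scale_eq_0_iff: "sc a x = 0 \<longleftrightarrow> a = 0 \<or> x = 0"
  by (metis scale_inverse_cancel scale_zero_left scale_zero_right)

lemma scale_add_eq_0_solve:
  assumes "sc c v + w = 0" "c \<noteq> 0"
  shows "v = sc (- inverse c) w"
proof -
  have "sc c v = - w"
    using assms(1) by (simp add: eq_neg_iff_add_eq_0)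
  then show ?thesis
    using scale_inverse_cancel[OF assms(2), of v] by (simp add: scale_minus_left scale_minus_right)
qed

lemma subspace_zero: "lsubspace sc X \<Longrightarrow> 0 \<in> X"
  and subspace_add: "lsubspace sc X \<Longrightarrow> x \<in> X \<Longrightarrow> y \<in> X \<Longrightarrow> x + y \<in> X"
  and subspace_scale: "lsubspace sc X \<Longrightarrow> x \<in> X \<Longrightarrow> sc a x \<in> X"
  by (simp_all add: lsubspace_def)

lemma subspace_uminus: "lsubspace sc X \<Longrightarrow> x \<in> X \<Longrightarrow> - x \<in> X"
  using subspace_scale[of X x "- 1"] by (simp add: scale_minus_left)

lemma subspace_diff: "lsubspace sc X \<Longrightarrow> x \<in> X \<Longrightarrow> y \<in> X \<Longrightarrow> x - y \<in> X"
  using subspace_add[of X x "- y"] subspace_uminus[of X y] by simp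

lemma lspan_least: "lsubspace sc W \<Longrightarrow> A \<subseteq> W \<Longrightarrow> lspan sc A \<subseteq> W"
  and lspan_superset: "A \<subseteq> lspan sc A"
  and lspan_subspace: "lsubspace sc (lspan sc A)"
  unfolding lspan_def lsubspace_def by blast+

definition span2 :: "'v \<Rightarrow> 'v \<Rightarrow> 'v set" where
  "span2 v w = {sc s v + sc t w | s t. True}"

lemma span2I: "sc s v + sc t w \<in> span2 v w"
  unfolding span2_def by blast

lemma span2_subspace: "lsubspace sc (span2 v w)"
  unfolding lsubspace_def
proof (intro conjI ballI allI)
  show "0 \<in> span2 v w"
    using span2I[of 0 v 0 w] by simp
next
  fix x y assume "x \<in> span2 v w" "y \<in> span2 v w"
  then obtain s t s' t' where "x = sc s v + sc t w" "y = sc s' v + sc t' w"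
    unfolding span2_def by blast
  then have "x + y = sc (s + s') v + sc (t + t') w"
    by (simp add: scale_left_distrib algebra_simps)
  then show "x + y \<in> span2 v w"
    by (simp only: span2I)
next
  fix a x assume "x \<in> span2 v w"
  then obtain s t where "x = sc s v + sc t w"
    unfolding span2_def by blast
  then have "sc a x = sc (a * s) v + sc (a * t) w"
    by (simp add: scale_right_distrib scale_scale)
  then show "sc a x \<in> span2 v w"
    by (simp only: span2I)
qed

lemma lspan_pair: "lspan sc {v, w} = span2 v w"
proof
  have "{v, w} \<subseteq> span2 v w"
    using span2I[of 1 v 0 w] span2I[of 0 v 1 w] by simp
  then show "lspan sc {v, w} \<subseteq> span2 v w"
    by (rule lspan_least[OF span2_subspace])
  have "v \<in> lspan sc {v, w}" "w \<in> lspan sc {v, w}"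
    using lspan_superset by blast+
  then show "span2 v w \<subseteq> lspan sc {v, w}"
    unfolding span2_def by (auto intro!: subspace_add[OF lspan_subspace] subspace_scale[OF lspan_subspace])
qed

lemma meetsI:
  "v \<noteq> 0 \<Longrightarrow> lsubspace sc L \<Longrightarrow> lsubspace sc X \<Longrightarrow> v \<in> L \<Longrightarrow> v \<in> X \<Longrightarrow> meets sc L X"
proof -
  assume v: "v \<noteq> 0" "lsubspace sc L" "lsubspace sc X" "v \<in> L" "v \<in> X"
  have "lspan sc {v} \<in> points sc"
    using v(1) by (auto simp: points_def)
  moreover have "lspan sc {v} \<subseteq> L" "lspan sc {v} \<subseteq> X"
    using v by (simp_all add: lspan_least)
  ultimately show ?thesis
    unfolding meets_def by blast
qed

lemma meetsE:
  assumes "meets sc L X"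
  obtains v where "v \<noteq> 0" "v \<in> L" "v \<in> X"
  using assms lspan_superset unfolding meets_def points_def by blast

lemma three_in_span2_dependent:
  assumes "p1 \<in> span2 v w" "p2 \<in> span2 v w" "p3 \<in> span2 v w"
  shows "\<exists>c1 c2 c3. (c1, c2, c3) \<noteq> (0, 0, 0) \<and> sc c1 p1 + sc c2 p2 + sc c3 p3 = 0"
proof -
  obtain s1 t1 s2 t2 s3 t3 where p: "p1 = sc s1 v + sc t1 w" "p2 = sc s2 v + sc t2 w"
    "p3 = sc s3 v + sc t3 w"
    using assms unfolding span2_def by blast
  obtain c1 c2 c3 where c: "(c1, c2, c3) \<noteq> (0, 0, 0)"
    "c1 * s1 + c2 * s2 + c3 * s3 = 0" "c1 * t1 + c2 * t2 + c3 * t3 = 0"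
    using two_equations_three_unknowns by blast
  have "sc c1 p1 + sc c2 p2 + sc c3 p3 =
      sc (c1 * s1 + c2 * s2 + c3 * s3) v + sc (c1 * t1 + c2 * t2 + c3 * t3) w"
    unfolding p by (simp add: scale_right_distrib scale_left_distrib scale_scale algebra_simps)
  then show ?thesis
    using c by auto
qed

lemma dependent_three_in_lspan:
  assumes "sc c1 v1 + sc c2 v2 + sc c3 v3 = 0" "c1 \<noteq> 0"
  shows "v1 \<in> lspan sc {v2, v3}"
proof -
  have "v1 = sc (- inverse c1) (sc c2 v2 + sc c3 v3)"
    using assms by (intro scale_add_eq_0_solve) (simp_all add: add.assoc)
  also have "\<dots> \<in> lspan sc {v2, v3}"
    unfolding lspan_pair by (simp add: scale_right_distrib scale_scale span2I)
  finally show ?thesis .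
qed

lemma span2_neq_UNIV:
  assumes "dim_gt2 sc"
  shows "span2 a b \<noteq> UNIV"
proof
  assume span: "span2 a b = UNIV"
  obtain S where S: "finite S" "card S = 3" "lindep_free sc S"
    using assms unfolding dim_gt2_def by blast
  then obtain v1 v2 v3 where v: "S = {v1, v2, v3}" "v1 \<noteq> v2" "v2 \<noteq> v3" "v1 \<noteq> v3"
    using card_3_iff by metis
  obtain c1 c2 c3 where c: "(c1, c2, c3) \<noteq> (0, 0, 0)" "sc c1 v1 + sc c2 v2 + sc c3 v3 = 0"
    using three_in_span2_dependent[of v1 a b v2 v3] span by blast
  have free: "v \<notin> lspan sc (S - {v})" if "v \<in> S" for v
    using S(3) that unfolding lindep_free_def by blast
  have S_minus: "S - {v1} = {v2, v3}" "S - {v2} = {v1, v3}" "S - {v3} = {v1, v2}"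
    using v by auto
  consider "c1 \<noteq> 0" | "c2 \<noteq> 0" | "c3 \<noteq> 0"
    using c(1) by auto
  then show False
  proof cases
    case 1
    have "v1 \<in> lspan sc {v2, v3}"
      using c(2) 1 by (rule dependent_three_in_lspan)
    then show False using free[of v1] S_minus v by auto
  next
    case 2
    have "sc c2 v2 + sc c1 v1 + sc c3 v3 = 0"
      using c(2) by (simp add: algebra_simps)
    then have "v2 \<in> lspan sc {v1, v3}"
      using 2 by (rule dependent_three_in_lspan)
    then show False using free[of v2] S_minus v by auto
  next
    case 3
    have "sc c3 v3 + sc c1 v1 + sc c2 v2 = 0"
      using c(2) by (simp add: algebra_simps)
    then have "v3 \<in> lspan sc {v1, v2}"
      using 3 by (rule dependent_three_in_lspan)
    then show False using free[of v3] S_minus v by auto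
  qed
qed

definition independent2 :: "'v \<Rightarrow> 'v \<Rightarrow> bool" where
  "independent2 a b \<longleftrightarrow> (\<forall>s t. sc s a + sc t b = 0 \<longrightarrow> s = 0 \<and> t = 0)"

lemma independent2_nonzero:
  assumes "independent2 a b"
  shows "a \<noteq> 0" "b \<noteq> 0"
  using assms[unfolded independent2_def, rule_format, of 1 0]
    assms[unfolded independent2_def, rule_format, of 0 1]
  by auto

lemma not_independent2_multiple:
  assumes "\<not> independent2 a b" "a \<noteq> 0"
  obtains k where "b = sc k a"
proof -
  obtain s t where st: "sc s a + sc t b = 0" "(s, t) \<noteq> (0, 0)"
    using assms(1) unfolding independent2_def by blast
  have "t \<noteq> 0"
    using st assms(2) by (auto simp: scale_eq_0_iff)
  then have "b = sc (- inverse t) (sc s a)"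
    using st(1) by (intro scale_add_eq_0_solve) (simp_all add: add.commute)
  then show ?thesis
    using that by (simp add: scale_scale)
qed

lemma independent2_scale_left:
  assumes "independent2 a b" "k \<noteq> 0"
  shows "independent2 (sc k a) b"
  unfolding independent2_def
proof (intro allI impI)
  fix s t assume "sc s (sc k a) + sc t b = 0"
  then have "sc (s * k) a + sc t b = 0"
    by (simp add: scale_scale)
  then have "s * k = 0 \<and> t = 0"
    using assms(1) unfolding independent2_def by blast
  then show "s = 0 \<and> t = 0"
    using assms(2) by simp
qed

lemma linear_on_UNIV_zero:
  assumes "linear_on sc UNIV g"
  shows "g 0 = 0"
proof -
  have "g (sc 0 0) = sc 0 (g 0)"
    using assms unfolding linear_on_def by blast
  then show ?thesis by simp
qed

lemma subspace_image_linear: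
  assumes g: "linear_on sc UNIV g" and X: "lsubspace sc X"
  shows "lsubspace sc (g ` X)"
  unfolding lsubspace_def
proof (intro conjI ballI allI)
  show "0 \<in> g ` X"
    using linear_on_UNIV_zero[OF g] subspace_zero[OF X] by (auto intro: image_eqI[of 0])
next
  fix a b assume "a \<in> g ` X" "b \<in> g ` X"
  then obtain x y where "x \<in> X" "y \<in> X" "a = g x" "b = g y" by blast
  moreover have "g (x + y) = g x + g y"
    using g by (simp add: linear_on_def)
  ultimately show "a + b \<in> g ` X"
    using subspace_add[OF X] by (auto intro: image_eqI[of _ _ "x + y"])
next
  fix k a assume "a \<in> g ` X"
  then obtain x where "x \<in> X" "a = g x" by blast
  moreover have "g (sc k x) = sc k (g x)"
    using g by (simp add: linear_on_def)
  ultimately show "sc k a \<in> g ` X"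
    using subspace_scale[OF X] by (auto intro: image_eqI[of _ _ "sc k x"])
qed

lemma Gset_image_automorphism:
  assumes g: "linear_on sc UNIV g" and h: "linear_on sc UNIV h"
    and gh: "\<And>v. g (h v) = v" and hg: "\<And>v. h (g v) = v" and X: "X \<in> Gset sc"
  shows "g ` X \<in> Gset sc"
proof -
  obtain f where f: "linear_on sc UNIV f" "range f = X" "{v. f v = 0} = X"
    using X by (auto simp: Gset_def iso_quot_def)
  define f' where "f' = g \<circ> f \<circ> h"
  have "lsubspace sc (g ` X)"
    using X g by (simp add: Gset_def iso_quot_def subspace_image_linear)
  moreover have "linear_on sc UNIV f'"
    using g h f(1) unfolding linear_on_def f'_def by simp
  moreover have "range f' = g ` X"
  proof -
    have "range h = UNIV"
      using hg by (auto intro: range_eqI[of _ h "g _"])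
    have "range f' = (g \<circ> f) ` range h"
      unfolding f'_def by (simp only: image_comp)
    then show ?thesis
      unfolding f(2)[symmetric] \<open>range h = UNIV\<close> by (simp only: image_comp)
  qed
  moreover have "{v. f' v = 0} = g ` X"
  proof -
    have "g y = 0 \<longleftrightarrow> y = 0" for y
      using hg[of y] linear_on_UNIV_zero[OF g] linear_on_UNIV_zero[OF h] by auto
    then have "f' v = 0 \<longleftrightarrow> h v \<in> X" for v
      using f(3) unfolding f'_def by auto
    then show ?thesis
      using gh hg by (auto intro: image_eqI[of _ g "h _"])
  qed
  ultimately show ?thesis
    by (auto simp: Gset_def iso_quot_def)
qed

lemma independent2_if_inter_trivial:
  assumes B: "lsubspace sc B" and pq: "p \<in> A" "q \<in> B" "p \<noteq> 0" "q \<noteq> 0"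
    and AB: "A \<inter> B \<subseteq> {0}"
  shows "independent2 p q"
  unfolding independent2_def
proof (intro allI impI)
  fix s t assume st: "sc s p + sc t q = 0"
  have "s = 0"
  proof (rule ccontr)
    assume "s \<noteq> 0"
    with st have "p = sc (- inverse s) (sc t q)"
      by (rule scale_add_eq_0_solve)
    then have "p \<in> B"
      using B pq(2) by (simp add: subspace_scale)
    then show False
      using AB pq(1,3) by blast
  qed
  then show "s = 0 \<and> t = 0"
    using st pq(4) by (simp add: scale_eq_0_iff)
qed

lemma three_points_on_line:
  assumes "p1 \<in> span2 v w" "p2 \<in> span2 v w" "p3 \<in> span2 v w"
    and A: "lsubspace sc A" "p1 \<in> A" "p1 \<noteq> 0"
    and B: "lsubspace sc B" "p2 \<in> B" "p2 \<noteq> 0"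
    and C: "p3 \<in> C" "p3 \<noteq> 0"
    and AB: "A \<inter> B \<subseteq> {0}" and AC: "A \<inter> C \<subseteq> {0}" and BC: "B \<inter> C \<subseteq> {0}"
  obtains s t where "s \<noteq> 0" "t \<noteq> 0" "p3 = sc s p1 + sc t p2"
proof -
  obtain c1 c2 c3 where c: "(c1, c2, c3) \<noteq> (0, 0, 0)" "sc c1 p1 + sc c2 p2 + sc c3 p3 = 0"
    using three_in_span2_dependent[OF assms(1-3)] by blast
  have "c3 \<noteq> 0"
    using c independent2_if_inter_trivial[OF B(1) A(2) B(2) A(3) B(3) AB]
    by (auto simp: independent2_def)
  then have "p3 = sc (- inverse c3) (sc c1 p1 + sc c2 p2)"
    using c(2) by (intro scale_add_eq_0_solve) (simp_all add: algebra_simps)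
  then have "p3 = sc (- inverse c3 * c1) p1 + sc (- inverse c3 * c2) p2"
    by (simp add: scale_right_distrib scale_scale)
  moreover define s t where "s = - inverse c3 * c1" and "t = - inverse c3 * c2"
  ultimately have p3: "p3 = sc s p1 + sc t p2"
    by simp
  have "independent2 p3 p2"
    by (rule independent2_if_inter_trivial[OF B(1) C(1) B(2) C(2) B(3)]) (use BC in blast)
  have "independent2 p3 p1"
    by (rule independent2_if_inter_trivial[OF A(1) C(1) A(2) C(2) A(3)]) (use AC in blast)
  show ?thesis
  proof (rule that[OF _ _ p3])
    show "s \<noteq> 0"
    proof
      assume "s = 0"
      then have "sc 1 p3 + sc (- t) p2 = 0"
        using p3 by (simp add: scale_minus_left)
      then have "(1::'k) = 0"
        using \<open>independent2 p3 p2\<close> unfolding independent2_def by blast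
      then show False
        by simp
    qed
    show "t \<noteq> 0"
    proof
      assume "t = 0"
      then have "sc 1 p3 + sc (- s) p1 = 0"
        using p3 by (simp add: scale_minus_left)
      then have "(1::'k) = 0"
        using \<open>independent2 p3 p1\<close> unfolding independent2_def by blast
      then show False
        by simp
    qed
  qed
qed

lemma central_cramer:
  assumes x: "x \<in> centre" "y \<in> centre" "x' \<in> centre" "y' \<in> centre"
    and d: "x * y' - y * x' \<noteq> 0"
  defines "e \<equiv> inverse (x * y' - y * x')"
  shows "sc x (sc e (sc y' p - sc x' r)) + sc x' (sc e (sc x r - sc y p)) = p"
    and "sc y (sc e (sc y' p - sc x' r)) + sc y' (sc e (sc x r - sc y p)) = r"
proof -
  have e: "e \<in> centre" "e * (x * y' - y * x') = 1"
    using x d by (simp_all add: e_def centre_closed)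
  have "sc x (sc e (sc y' p - sc x' r)) + sc x' (sc e (sc x r - sc y p))
      = sc (x * (e * y') - x' * (e * y)) p + sc (x' * (e * x) - x * (e * x')) r"
    by (simp add: scale_right_diff_distrib scale_left_diff_distrib scale_scale algebra_simps)
  also have "\<dots> = p"
    using x e by (simp add: algebra_simps centre_commute centre_left_commute)
  finally show "sc x (sc e (sc y' p - sc x' r)) + sc x' (sc e (sc x r - sc y p)) = p" .
  have "sc y (sc e (sc y' p - sc x' r)) + sc y' (sc e (sc x r - sc y p))
      = sc (y * (e * y') - y' * (e * y)) p + sc (y' * (e * x) - y * (e * x')) r"
    by (simp add: scale_right_diff_distrib scale_left_diff_distrib scale_scale algebra_simps)
  also have "\<dots> = r"
    using x e by (simp add: algebra_simps centre_commute centre_left_commute)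
  finally show "sc y (sc e (sc y' p - sc x' r)) + sc y' (sc e (sc x r - sc y p)) = r" .
qed

end

section \<open>The subspaces T(x, y)\<close>

locale distant_pair = left_vector_space sc for sc :: "'k::division_ring \<Rightarrow> 'v::ab_group_add \<Rightarrow> 'v" +
  fixes U U' :: "'v set" and lam :: "'v \<Rightarrow> 'v"
  assumes U_Gset: "U \<in> Gset sc" and U'_Gset: "U' \<in> Gset sc" and distant: "distant sc U U'"
    and lam_linear: "linear_on sc U lam" and lam_bij: "bij_betw lam U U'"
begin

lemma U_subspace: "lsubspace sc U"
  and U'_subspace: "lsubspace sc U'"
  using U_Gset U'_Gset by (simp_all add: Gset_def iso_quot_def)

lemma zero_in_U [simp]: "0 \<in> U"
  and zero_in_U' [simp]: "0 \<in> U'"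
  by (simp_all add: subspace_zero U_subspace U'_subspace)

lemma U_decompose:
  obtains p q where "p \<in> U" "q \<in> U'" "v = p + q"
proof -
  have "\<exists>p\<in>U. \<exists>q\<in>U'. v = p + q"
    using distant by (simp add: distant_def)
  then show ?thesis
    using that by blast
qed

lemma U_inter_U': "x \<in> U \<Longrightarrow> x \<in> U' \<Longrightarrow> x = 0"
  using distant by (auto simp: distant_def)

lemma U_components_unique:
  assumes "p \<in> U" "p' \<in> U" "q \<in> U'" "q' \<in> U'" "p + q = p' + q'"
  shows "p = p'" "q = q'"
proof -
  have "p - p' = q' - q"
    using assms(5) by (simp add: algebra_simps)
  moreover have "p - p' \<in> U" "q' - q \<in> U'"
    using assms by (simp_all add: subspace_diff U_subspace U'_subspace)
  ultimately have "p - p' = 0"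
    using U_inter_U' by metis
  then show "p = p'" "q = q'"
    using assms(5) by simp_all
qed

lemma lam_add: "u \<in> U \<Longrightarrow> w \<in> U \<Longrightarrow> lam (u + w) = lam u + lam w"
  and lam_scale: "u \<in> U \<Longrightarrow> lam (sc a u) = sc a (lam u)"
  using lam_linear by (simp_all add: linear_on_def)

lemma lam_in_U': "u \<in> U \<Longrightarrow> lam u \<in> U'"
  using lam_bij by (auto simp: bij_betw_def)

lemma lam_zero [simp]: "lam 0 = 0"
  using lam_scale[OF zero_in_U, of 0] by simp

lemma lam_inj: "u \<in> U \<Longrightarrow> w \<in> U \<Longrightarrow> lam u = lam w \<Longrightarrow> u = w"
  using lam_bij by (auto simp: bij_betw_def inj_on_def)

lemma lam_eq_0_iff: "u \<in> U \<Longrightarrow> lam u = 0 \<longleftrightarrow> u = 0"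
  using lam_inj[of u 0] by auto

lemma U'_lam_image:
  assumes "q \<in> U'"
  obtains r where "r \<in> U" "q = lam r"
  using assms lam_bij by (auto simp: bij_betw_def)

definition tvec :: "'k \<Rightarrow> 'k \<Rightarrow> 'v \<Rightarrow> 'v" where
  "tvec x y u = sc x u + sc y (lam u)"

lemma Tsub_eq_image: "Tsub sc U lam x y = tvec x y ` U"
  unfolding Tsub_def tvec_def by auto

lemma tvecI: "u \<in> U \<Longrightarrow> tvec x y u \<in> Tsub sc U lam x y"
  by (simp add: Tsub_eq_image)

lemma tvec_components: "u \<in> U \<Longrightarrow> sc x u \<in> U \<and> sc y (lam u) \<in> U'"
  by (simp add: lam_in_U' subspace_scale U_subspace U'_subspace)

lemma tvec_zero [simp]: "tvec x y 0 = 0"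
  by (simp add: tvec_def)

lemma tvec_add: "u \<in> U \<Longrightarrow> w \<in> U \<Longrightarrow> tvec x y (u + w) = tvec x y u + tvec x y w"
  by (simp add: tvec_def lam_add scale_right_distrib algebra_simps)

lemma tvec_scale:
  "x \<in> centre \<Longrightarrow> y \<in> centre \<Longrightarrow> u \<in> U \<Longrightarrow> tvec x y (sc a u) = sc a (tvec x y u)"
  by (simp add: tvec_def lam_scale scale_right_distrib scale_scale centre_commute)

lemma tvec_mult_left:
  "x \<in> centre \<Longrightarrow> y \<in> centre \<Longrightarrow> u \<in> U \<Longrightarrow> tvec (k * x) (k * y) u = tvec x y (sc k u)"
  by (simp add: tvec_def lam_scale scale_scale centre_commute)

lemma tvec_combination:
  "sc a (tvec x1 y1 u) + sc b (tvec x2 y2 u) = tvec (a * x1 + b * x2) (a * y1 + b * y2) u"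
  by (simp add: tvec_def scale_right_distrib scale_left_distrib scale_scale algebra_simps)

lemma tvec_nonzero:
  assumes "u \<in> U" "u \<noteq> 0" "(x, y) \<noteq> (0, 0)"
  shows "tvec x y u \<noteq> 0"
proof
  assume "tvec x y u = 0"
  then have "sc x u + sc y (lam u) = 0 + 0"
    by (simp add: tvec_def)
  then have "sc x u = 0" "sc y (lam u) = 0"
    using U_components_unique tvec_components[OF assms(1)] by (metis zero_in_U zero_in_U')+
  then show False
    using assms by (auto simp: scale_eq_0_iff lam_eq_0_iff)
qed

lemma Tsub_subspace:
  assumes "x \<in> centre" "y \<in> centre"
  shows "lsubspace sc (Tsub sc U lam x y)"
  unfolding Tsub_eq_image lsubspace_def
proof (intro conjI ballI allI)
  show "0 \<in> tvec x y ` U"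
    by (metis image_eqI tvec_zero zero_in_U)
next
  fix a b assume "a \<in> tvec x y ` U" "b \<in> tvec x y ` U"
  then obtain u w where "u \<in> U" "w \<in> U" "a = tvec x y u" "b = tvec x y w" by blast
  then show "a + b \<in> tvec x y ` U"
    by (metis image_eqI tvec_add subspace_add U_subspace)
next
  fix k a assume "a \<in> tvec x y ` U"
  then obtain u where "u \<in> U" "a = tvec x y u" by blast
  then show "sc k a \<in> tvec x y ` U"
    by (metis assms image_eqI tvec_scale subspace_scale U_subspace)
qed

lemma Tsub_one_zero: "Tsub sc U lam 1 0 = U"
  unfolding Tsub_eq_image tvec_def by simp

lemma Tsub_zero_left:
  assumes "y \<noteq> 0"
  shows "Tsub sc U lam 0 y = U'"
proof
  show "Tsub sc U lam 0 y \<subseteq> U'"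
    unfolding Tsub_eq_image tvec_def by (auto simp: lam_in_U' subspace_scale U'_subspace)
  show "U' \<subseteq> Tsub sc U lam 0 y"
  proof
    fix q assume "q \<in> U'"
    then obtain r where r: "r \<in> U" "q = lam r"
      by (rule U'_lam_image)
    then have "q = tvec 0 y (sc (inverse y) r)"
      using assms by (simp add: tvec_def lam_scale scale_scale)
    then show "q \<in> Tsub sc U lam 0 y"
      using r(1) by (simp add: tvecI subspace_scale U_subspace)
  qed
qed

lemma Tsub_mult_left:
  assumes "x \<in> centre" "y \<in> centre" "k \<noteq> 0"
  shows "Tsub sc U lam (k * x) (k * y) = Tsub sc U lam x y"
proof -
  have "tvec (k * x) (k * y) ` U = tvec x y ` sc k ` U"
    using assms(1,2) by (auto simp: tvec_mult_left image_image)
  also have "sc k ` U = U"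
  proof
    show "sc k ` U \<subseteq> U"
      by (auto simp: subspace_scale U_subspace)
    show "U \<subseteq> sc k ` U"
      using assms(3) by (auto intro!: image_eqI[of _ _ "sc (inverse k) _"]
          simp: scale_cancel_inverse subspace_scale U_subspace)
  qed
  finally show ?thesis
    by (simp add: Tsub_eq_image)
qed

lemma Tsub_eq_if_det_zero:
  assumes c: "x \<in> centre" "y \<in> centre" "x' \<in> centre" "y' \<in> centre"
    and d: "x * y' - y * x' = 0" and nz: "(x, y) \<noteq> (0, 0)" "(x', y') \<noteq> (0, 0)"
  shows "Tsub sc U lam x y = Tsub sc U lam x' y'"
proof (cases "x = 0")
  case False
  define k where "k = x' * inverse x"
  have x': "x' = k * x"
    using False by (simp add: k_def mult.assoc)
  have "y' = inverse x * (x * y')"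
    using False by (simp flip: mult.assoc)
  also have "\<dots> = k * y"
    using c d by (simp add: k_def centre_closed centre_commute centre_left_commute mult.assoc)
  finally have y': "y' = k * y" .
  have "k \<noteq> 0"
    using x' y' nz by auto
  then show ?thesis
    using Tsub_mult_left[OF c(1,2)] x' y' by simp
next
  case True
  then have "y \<noteq> 0" "x' = 0"
    using nz d by auto
  then show ?thesis
    using True nz by (simp add: Tsub_zero_left)
qed

lemma tvec_decompose:
  assumes c: "x \<in> centre" "y \<in> centre" "x' \<in> centre" "y' \<in> centre"
    and d: "x * y' - y * x' \<noteq> 0"
  obtains u w where "u \<in> U" "w \<in> U" "v = tvec x y u + tvec x' y' w"
proof -
  obtain p q where pq: "p \<in> U" "q \<in> U'" "v = p + q"
    by (rule U_decompose)
  obtain r where r: "r \<in> U" "q = lam r"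
    using pq(2) by (rule U'_lam_image)
  define e where "e = inverse (x * y' - y * x')"
  define u where "u = sc e (sc y' p - sc x' r)"
  define w where "w = sc e (sc x r - sc y p)"
  have uw: "u \<in> U" "w \<in> U"
    using pq r by (simp_all add: u_def w_def subspace_scale subspace_diff U_subspace)
  have "tvec x y u + tvec x' y' w = (sc x u + sc x' w) + lam (sc y u + sc y' w)"
    using uw by (simp add: tvec_def lam_add lam_scale subspace_scale U_subspace algebra_simps)
  also have "\<dots> = v"
    using central_cramer[OF c d] pq r by (simp add: u_def w_def e_def)
  finally show ?thesis
    using that uw by simp
qed

lemma tvec_eq_tvec_imp_zero:
  assumes c: "x \<in> centre" "y \<in> centre" "x' \<in> centre" "y' \<in> centre"
    and d: "x * y' - y * x' \<noteq> 0"
    and uw: "u \<in> U" "w \<in> U" "tvec x y u = tvec x' y' w"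
  shows "u = 0"
proof -
  have "sc x u + sc y (lam u) = sc x' w + sc y' (lam w)"
    using uw(3) by (simp add: tvec_def)
  moreover have "sc x u \<in> U" "sc x' w \<in> U" "sc y (lam u) \<in> U'" "sc y' (lam w) \<in> U'"
    using tvec_components uw(1,2) by simp_all
  ultimately have xu: "sc x u = sc x' w" and "sc y (lam u) = sc y' (lam w)"
    using U_components_unique by blast+
  then have "lam (sc y u) = lam (sc y' w)"
    using uw(1,2) by (simp add: lam_scale)
  then have yu: "sc y u = sc y' w"
    using uw by (simp add: lam_inj subspace_scale U_subspace)
  have "sc (y' * x - x' * y) u = sc y' (sc x u) - sc x' (sc y u)"
    by (simp add: scale_left_diff_distrib scale_scale)
  also have "\<dots> = 0"
    using c by (simp add: xu yu scale_scale centre_commute)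
  finally show "u = 0"
    using c d by (simp add: scale_eq_0_iff centre_commute)
qed

lemma Tsub_distant:
  assumes c: "x \<in> centre" "y \<in> centre" "x' \<in> centre" "y' \<in> centre"
    and d: "x * y' - y * x' \<noteq> 0"
  shows "distant sc (Tsub sc U lam x y) (Tsub sc U lam x' y')"
  unfolding distant_def Tsub_eq_image
proof (intro conjI allI)
  fix v
  obtain u w where "u \<in> U" "w \<in> U" "v = tvec x y u + tvec x' y' w"
    using tvec_decompose[OF c d] .
  then show "\<exists>a\<in>tvec x y ` U. \<exists>b\<in>tvec x' y' ` U. v = a + b"
    by blast
next
  have "0 \<in> tvec x y ` U" "0 \<in> tvec x' y' ` U"
    by (rule image_eqI[of _ _ 0], simp, simp)+
  then show "tvec x y ` U \<inter> tvec x' y' ` U = {0}"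
    using tvec_eq_tvec_imp_zero[OF c d] by fastforce
qed

definition projU :: "'v \<Rightarrow> 'v" where
  "projU v = (SOME p. p \<in> U \<and> v - p \<in> U')"

lemma projU_mem: "projU v \<in> U" "v - projU v \<in> U'"
proof -
  obtain p q where "p \<in> U" "q \<in> U'" "v = p + q"
    by (rule U_decompose)
  then have "\<exists>p. p \<in> U \<and> v - p \<in> U'"
    by (intro exI[of _ p]) simp
  then show "projU v \<in> U" "v - projU v \<in> U'"
    unfolding projU_def by (metis (mono_tags, lifting) someI_ex)+
qed

lemma projU_unique:
  assumes "p \<in> U" "v - p \<in> U'"
  shows "projU v = p"
  using U_components_unique(1)[OF projU_mem(1)[of v] assms(1) projU_mem(2)[of v] assms(2)] by simp

lemma projU_U: "u \<in> U \<Longrightarrow> projU u = u"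
  by (rule projU_unique) simp_all

lemma projU_add_U': "q \<in> U' \<Longrightarrow> projU (v + q) = projU v"
  using projU_mem[of v] by (intro projU_unique)
    (simp_all add: diff_add_eq[symmetric] add_diff_eq[symmetric] subspace_add U'_subspace)

lemma projU_linear: "linear_on sc UNIV projU"
  unfolding linear_on_def
proof (intro conjI ballI allI)
  fix v w
  have "v + w - (projU v + projU w) = (v - projU v) + (w - projU w)"
    by (simp add: algebra_simps)
  also have "\<dots> \<in> U'"
    using projU_mem by (simp add: subspace_add U'_subspace)
  finally show "projU (v + w) = projU v + projU w"
    using projU_mem by (simp add: projU_unique subspace_add U_subspace)
next
  fix a v
  have "sc a v - sc a (projU v) \<in> U'"
    using projU_mem by (simp add: subspace_scale U'_subspace flip: scale_right_diff_distrib)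
  then show "projU (sc a v) = sc a (projU v)"
    using projU_mem by (simp add: projU_unique subspace_scale U_subspace)
qed

text \<open>The shear \<open>v \<mapsto> v + c (\<pi> v)\<^sup>\<lambda>\<close>, with \<open>\<pi>\<close> the projection onto \<open>U\<close> along \<open>U'\<close>,
  is a linear automorphism of \<open>V\<close> carrying \<open>U \<in> \<G>\<close> onto \<open>T(1, c)\<close>.\<close>
definition shear :: "'k \<Rightarrow> 'v \<Rightarrow> 'v" where
  "shear c v = v + sc c (lam (projU v))"

lemma shear_shear_uminus: "shear c (shear (- c) v) = v"
proof -
  have "sc (- c) (lam (projU v)) \<in> U'"
    using projU_mem by (simp add: lam_in_U' subspace_scale U'_subspace)
  then have "projU (shear (- c) v) = projU v"
    unfolding shear_def by (rule projU_add_U')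
  then show ?thesis
    by (simp add: shear_def[of c] shear_def[of "- c"] scale_minus_left)
qed

lemma shear_linear:
  assumes "c \<in> centre"
  shows "linear_on sc UNIV (shear c)"
  using projU_linear projU_mem(1) assms
  by (simp add: linear_on_def shear_def lam_add lam_scale scale_right_distrib scale_scale
      centre_commute algebra_simps)

lemma shear_image_U: "shear c ` U = Tsub sc U lam 1 c"
  unfolding Tsub_eq_image by (auto simp: shear_def tvec_def projU_U)

lemma Tsub_in_Gset:
  assumes xy: "x \<in> centre" "y \<in> centre" and nz: "(x, y) \<noteq> (0, 0)"
  shows "Tsub sc U lam x y \<in> Gset sc"
proof (cases "x = 0")
  case True
  then show ?thesis
    using nz by (simp add: Tsub_zero_left U'_Gset)
next
  case False
  define c where "c = inverse x * y"
  have c_centre: "c \<in> centre"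
    unfolding c_def by (intro centre_mult centre_inverse xy)
  have "Tsub sc U lam x y = Tsub sc U lam 1 c"
  proof (rule Tsub_eq_if_det_zero[OF xy one_in_centre c_centre _ nz])
    show "x * c - y * 1 = 0"
      using False by (simp add: c_def flip: mult.assoc)
  qed simp
  also have "\<dots> = shear c ` U"
    by (simp add: shear_image_U)
  also have "\<dots> \<in> Gset sc"
  proof (rule Gset_image_automorphism)
    show "linear_on sc UNIV (shear c)" "linear_on sc UNIV (shear (- c))"
      using c_centre by (simp_all add: shear_linear centre_uminus)
    show "shear c (shear (- c) v) = v" "shear (- c) (shear c v) = v" for v
      using shear_shear_uminus[of "- c" v] by (simp_all add: shear_shear_uminus)
  qed (rule U_Gset)
  finally show ?thesis .
qed

lemma span2_UNIV_if_U_cyclic: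
  assumes "a \<in> U" and cyclic: "\<And>b. b \<in> U \<Longrightarrow> \<exists>k. b = sc k a"
  shows "span2 a (lam a) = UNIV"
proof -
  have "v \<in> span2 a (lam a)" for v
  proof -
    obtain p q where pq: "p \<in> U" "q \<in> U'" "v = p + q"
      by (rule U_decompose)
    obtain r where r: "r \<in> U" "q = lam r"
      using pq(2) by (rule U'_lam_image)
    obtain k1 k2 where "p = sc k1 a" "r = sc k2 a"
      using cyclic pq(1) r(1) by blast
    then have "v = sc k1 a + sc k2 (lam a)"
      using pq r assms(1) by (simp add: lam_scale)
    then show ?thesis
      by (simp only: span2I)
  qed
  then show ?thesis
    by blast
qed

lemma U_nonzero:
  assumes "dim_gt2 sc"
  obtains a where "a \<in> U" "a \<noteq> 0"
proof -
  have "\<exists>a\<in>U. a \<noteq> 0"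
  proof (rule ccontr)
    assume "\<not> (\<exists>a\<in>U. a \<noteq> 0)"
    then have "span2 0 (lam 0) = UNIV"
      by (intro span2_UNIV_if_U_cyclic) auto
    then show False
      using span2_neq_UNIV[OF assms] by blast
  qed
  then show ?thesis
    using that by blast
qed

lemma U_independent:
  assumes "dim_gt2 sc" "a \<in> U" "a \<noteq> 0"
  obtains b where "b \<in> U" "independent2 a b"
proof -
  have "\<exists>b\<in>U. independent2 a b"
  proof (rule ccontr)
    assume "\<not> (\<exists>b\<in>U. independent2 a b)"
    then have "span2 a (lam a) = UNIV"
      using assms(2,3) not_independent2_multiple by (metis span2_UNIV_if_U_cyclic)
    then show False
      using span2_neq_UNIV[OF assms(1)] by blast
  qed
  then show ?thesis
    using that by blast
qed

lemma Tsub_neq_iff_det_nonzero: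
  assumes dim: "dim_gt2 sc"
    and c: "x \<in> centre" "y \<in> centre" "x' \<in> centre" "y' \<in> centre"
    and nz: "(x, y) \<noteq> (0, 0)" "(x', y') \<noteq> (0, 0)"
  shows "Tsub sc U lam x y \<noteq> Tsub sc U lam x' y' \<longleftrightarrow> x * y' - y * x' \<noteq> 0"
proof
  show "Tsub sc U lam x y \<noteq> Tsub sc U lam x' y' \<Longrightarrow> x * y' - y * x' \<noteq> 0"
    using Tsub_eq_if_det_zero[OF c _ nz] by blast
next
  assume d: "x * y' - y * x' \<noteq> 0"
  obtain a where a: "a \<in> U" "a \<noteq> 0"
    using dim by (rule U_nonzero)
  have "tvec x y a \<noteq> 0"
    using a nz(1) by (rule tvec_nonzero)
  moreover have "tvec x y a \<in> Tsub sc U lam x y"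
    using a(1) by (rule tvecI)
  moreover have "Tsub sc U lam x y \<inter> Tsub sc U lam x' y' = {0}"
    using Tsub_distant[OF c d] by (simp add: distant_def)
  ultimately show "Tsub sc U lam x y \<noteq> Tsub sc U lam x' y'"
    by auto
qed

section \<open>The regulus\<close>

definition Tregulus :: "'v set set" where
  "Tregulus = {Tsub sc U lam x y | x y. x \<in> centre \<and> y \<in> centre \<and> (x, y) \<noteq> (0, 0)}"

lemma Tregulus_memI:
  "x \<in> centre \<Longrightarrow> y \<in> centre \<Longrightarrow> (x, y) \<noteq> (0, 0) \<Longrightarrow> Tsub sc U lam x y \<in> Tregulus"
  unfolding Tregulus_def by blast

lemma Tregulus_memE:
  assumes "X \<in> Tregulus"
  obtains x y where "x \<in> centre" "y \<in> centre" "(x, y) \<noteq> (0, 0)" "X = Tsub sc U lam x y"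
  using assms unfolding Tregulus_def by blast

lemma U_in_Tregulus: "U \<in> Tregulus"
  and U'_in_Tregulus: "U' \<in> Tregulus"
  and Tsub_one_one_in_Tregulus: "Tsub sc U lam 1 1 \<in> Tregulus"
  using Tregulus_memI[of 1 0] Tregulus_memI[of 0 1] Tregulus_memI[of 1 1]
  by (simp_all add: Tsub_one_zero Tsub_zero_left)

lemma Tregulus_subset_Gset: "Tregulus \<subseteq> Gset sc"
  by (auto elim!: Tregulus_memE intro: Tsub_in_Gset)

lemma Tregulus_distinct:
  assumes "dim_gt2 sc"
  shows "U \<noteq> U'" "U \<noteq> Tsub sc U lam 1 1" "U' \<noteq> Tsub sc U lam 1 1"
  using Tsub_neq_iff_det_nonzero[OF assms, of 1 0 0 1] Tsub_neq_iff_det_nonzero[OF assms, of 1 0 1 1]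
    Tsub_neq_iff_det_nonzero[OF assms, of 0 1 1 1]
  by (simp_all add: Tsub_one_zero Tsub_zero_left)

lemma Tregulus_R1:
  assumes "dim_gt2 sc"
  shows "R1 sc Tregulus"
  unfolding R1_def
proof (intro conjI ballI impI)
  fix X Y assume "X \<in> Tregulus" "Y \<in> Tregulus" "X \<noteq> Y"
  then show "distant sc X Y"
    by (elim Tregulus_memE) (metis Tsub_distant Tsub_neq_iff_det_nonzero[OF assms])
next
  show "\<exists>A\<in>Tregulus. \<exists>B\<in>Tregulus. \<exists>C\<in>Tregulus. A \<noteq> B \<and> A \<noteq> C \<and> B \<noteq> C"
    using U_in_Tregulus U'_in_Tregulus Tsub_one_one_in_Tregulus Tregulus_distinct[OF assms]
    by blast
qed

lemma collinear_tvec_proportional: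
  assumes c: "x1 \<in> centre" "y1 \<in> centre" "x2 \<in> centre" "y2 \<in> centre" "x3 \<in> centre" "y3 \<in> centre"
    and u: "u1 \<in> U" "u2 \<in> U" "u3 \<in> U"
    and d: "x2 * y3 - y2 * x3 \<noteq> 0" and t: "t \<noteq> 0"
    and on_line: "tvec x3 y3 u3 = sc s (tvec x1 y1 u1) + sc t (tvec x2 y2 u2)"
  obtains k where "u2 = sc k u1"
proof -
  define a where "a = sc (s * x1) u1 + sc (t * x2) u2"
  define b where "b = sc (s * y1) u1 + sc (t * y2) u2"
  have ab: "a \<in> U" "b \<in> U"
    using u by (simp_all add: a_def b_def subspace_add subspace_scale U_subspace)
  have "sc x3 u3 + sc y3 (lam u3) = a + lam b"
    using on_line u
    by (simp add: a_def b_def tvec_def lam_add lam_scale subspace_scale U_subspace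
        scale_right_distrib scale_scale algebra_simps)
  moreover have "sc x3 u3 \<in> U" "sc y3 (lam u3) \<in> U'"
    using tvec_components u(3) by simp_all
  ultimately have "sc x3 u3 = a" "lam (sc y3 u3) = lam b"
    using U_components_unique[of "sc x3 u3" a "sc y3 (lam u3)" "lam b"] ab u(3)
    by (simp_all add: lam_in_U' lam_scale)
  then have a_eq: "sc x3 u3 = a" and b_eq: "sc y3 u3 = b"
    using ab u(3) by (simp_all add: lam_inj subspace_scale U_subspace)
  \<comment> \<open>eliminate \<open>u3\<close>: \<open>y3 x3 u3 = x3 y3 u3\<close>\<close>
  have "sc y3 a - sc x3 b = 0"
    using c(5,6) by (simp add: flip: a_eq b_eq add: scale_scale centre_commute)
  moreover have "sc y3 a - sc x3 b =
      sc (y3 * (s * x1) - x3 * (s * y1)) u1 + sc (y3 * (t * x2) - x3 * (t * y2)) u2"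
    by (simp add: a_def b_def scale_right_distrib scale_scale scale_left_diff_distrib algebra_simps)
  moreover have "y3 * (t * x2) - x3 * (t * y2) = t * (x2 * y3 - y2 * x3)"
  proof -
    have "y3 * (t * x2) = t * (x2 * y3)" "x3 * (t * y2) = t * (y2 * x3)"
      by (simp_all only: centre_commute[OF c(6)] centre_commute[OF c(5)] mult.assoc)
    then show ?thesis
      by (simp add: right_diff_distrib)
  qed
  ultimately have "sc (t * (x2 * y3 - y2 * x3)) u2 + sc (y3 * (s * x1) - x3 * (s * y1)) u1 = 0"
    by (simp add: add.commute)
  then have "u2 = sc (- inverse (t * (x2 * y3 - y2 * x3))) (sc (y3 * (s * x1) - x3 * (s * y1)) u1)"
    using t d by (intro scale_add_eq_0_solve) simp_all
  then show ?thesis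
    using that by (simp add: scale_scale)
qed

lemma tvec_in_subspace_of_two:
  assumes L: "lsubspace sc L" "tvec x1 y1 u \<in> L" "tvec x2 y2 u \<in> L"
    and c: "x1 \<in> centre" "y1 \<in> centre" "x2 \<in> centre" "y2 \<in> centre" "x \<in> centre" "y \<in> centre"
    and d: "x1 * y2 - y1 * x2 \<noteq> 0"
  shows "tvec x y u \<in> L"
proof -
  obtain a b where "a * x1 + b * x2 = x" "a * y1 + b * y2 = y"
    using central_cramer_scalar[OF c d] by blast
  then have "tvec x y u = sc a (tvec x1 y1 u) + sc b (tvec x2 y2 u)"
    by (simp add: tvec_combination)
  then show ?thesis
    using L by (simp add: subspace_add subspace_scale)
qed

lemma Tregulus_meets_line:
  assumes "X \<in> Tregulus" "meets sc L X"
  obtains x y u where "x \<in> centre" "y \<in> centre" "(x, y) \<noteq> (0, 0)" "X = Tsub sc U lam x y"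
    "u \<in> U" "u \<noteq> 0" "tvec x y u \<in> L"
proof -
  obtain x y where xy: "x \<in> centre" "y \<in> centre" "(x, y) \<noteq> (0, 0)" "X = Tsub sc U lam x y"
    using assms(1) by (rule Tregulus_memE)
  obtain p where p: "p \<noteq> 0" "p \<in> L" "p \<in> X"
    using assms(2) by (rule meetsE)
  then obtain u where "u \<in> U" "p = tvec x y u"
    using xy(4) by (auto simp: Tsub_eq_image)
  then show ?thesis
    using that xy p by fastforce
qed

lemma line_contains_fibre:
  assumes L: "L = span2 v w"
    and 1: "x1 \<in> centre" "y1 \<in> centre" "u1 \<in> U" "u1 \<noteq> 0" "tvec x1 y1 u1 \<in> L"
    and 2: "x2 \<in> centre" "y2 \<in> centre" "u2 \<in> U" "u2 \<noteq> 0" "tvec x2 y2 u2 \<in> L"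
    and 3: "x3 \<in> centre" "y3 \<in> centre" "u3 \<in> U" "u3 \<noteq> 0" "tvec x3 y3 u3 \<in> L"
    and d12: "x1 * y2 - y1 * x2 \<noteq> 0" and d13: "x1 * y3 - y1 * x3 \<noteq> 0"
    and d23: "x2 * y3 - y2 * x3 \<noteq> 0"
    and xy: "x \<in> centre" "y \<in> centre"
  shows "tvec x y u1 \<in> L"
proof -
  have L_subspace: "lsubspace sc L"
    unfolding L by (rule span2_subspace)
  have "(x1, y1) \<noteq> (0, 0)" "(x2, y2) \<noteq> (0, 0)" "(x3, y3) \<noteq> (0, 0)"
    using d12 d13 by auto
  then have nonzero: "tvec x1 y1 u1 \<noteq> 0" "tvec x2 y2 u2 \<noteq> 0" "tvec x3 y3 u3 \<noteq> 0"
    using 1(3,4) 2(3,4) 3(3,4) by (simp_all add: tvec_nonzero)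
  have inter: "Tsub sc U lam x1 y1 \<inter> Tsub sc U lam x2 y2 \<subseteq> {0}"
    "Tsub sc U lam x1 y1 \<inter> Tsub sc U lam x3 y3 \<subseteq> {0}"
    "Tsub sc U lam x2 y2 \<inter> Tsub sc U lam x3 y3 \<subseteq> {0}"
    using Tsub_distant d12 d13 d23 1 2 3 by (simp_all add: distant_def)
  obtain s t where "t \<noteq> 0" "tvec x3 y3 u3 = sc s (tvec x1 y1 u1) + sc t (tvec x2 y2 u2)"
    using three_points_on_line[OF 1(5)[unfolded L] 2(5)[unfolded L] 3(5)[unfolded L]
        Tsub_subspace[OF 1(1,2)] tvecI[OF 1(3)] nonzero(1) Tsub_subspace[OF 2(1,2)] tvecI[OF 2(3)]
        nonzero(2) tvecI[OF 3(3)] nonzero(3) inter]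
    by blast
  then obtain k where k: "u2 = sc k u1"
    using collinear_tvec_proportional 1 2 3 d23 by metis
  \<comment> \<open>so \<open>L\<close> contains the points over \<open>u1\<close> of two distinct \<open>T(x, y)\<close>, hence those of all\<close>
  have "k \<noteq> 0"
    using k 2(4) by auto
  then have "tvec x2 y2 u1 = sc (inverse k) (tvec x2 y2 u2)"
    using k 1(3) 2 by (simp add: tvec_scale scale_inverse_cancel)
  then have "tvec x2 y2 u1 \<in> L"
    using 2(5) L_subspace by (simp add: subspace_scale)
  then show ?thesis
    using tvec_in_subspace_of_two[OF L_subspace 1(5)] 1 2 d12 xy by blast
qed

lemma Tregulus_R2:
  assumes dim: "dim_gt2 sc"
  shows "R2 sc Tregulus"
  unfolding R2_def
proof (intro ballI impI)
  fix L X
  assume L: "L \<in> lines sc" and X: "X \<in> Tregulus"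
  assume "\<exists>A\<in>Tregulus. \<exists>B\<in>Tregulus. \<exists>C\<in>Tregulus. A \<noteq> B \<and> A \<noteq> C \<and> B \<noteq> C \<and>
    meets sc L A \<and> meets sc L B \<and> meets sc L C"
  then obtain A B C where ABC: "A \<in> Tregulus" "B \<in> Tregulus" "C \<in> Tregulus" "A \<noteq> B" "A \<noteq> C" "B \<noteq> C"
    "meets sc L A" "meets sc L B" "meets sc L C"
    by blast
  obtain v w where L_span: "L = span2 v w"
    using L by (auto simp: lines_def lspan_pair)
  obtain x1 y1 u1 where 1: "x1 \<in> centre" "y1 \<in> centre" "(x1, y1) \<noteq> (0, 0)"
    "A = Tsub sc U lam x1 y1" "u1 \<in> U" "u1 \<noteq> 0" "tvec x1 y1 u1 \<in> L"
    using ABC(1,7) by (rule Tregulus_meets_line)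
  obtain x2 y2 u2 where 2: "x2 \<in> centre" "y2 \<in> centre" "(x2, y2) \<noteq> (0, 0)"
    "B = Tsub sc U lam x2 y2" "u2 \<in> U" "u2 \<noteq> 0" "tvec x2 y2 u2 \<in> L"
    using ABC(2,8) by (rule Tregulus_meets_line)
  obtain x3 y3 u3 where 3: "x3 \<in> centre" "y3 \<in> centre" "(x3, y3) \<noteq> (0, 0)"
    "C = Tsub sc U lam x3 y3" "u3 \<in> U" "u3 \<noteq> 0" "tvec x3 y3 u3 \<in> L"
    using ABC(3,9) by (rule Tregulus_meets_line)
  have "x1 * y2 - y1 * x2 \<noteq> 0" "x1 * y3 - y1 * x3 \<noteq> 0" "x2 * y3 - y2 * x3 \<noteq> 0"
    using Tsub_neq_iff_det_nonzero[OF dim] 1 2 3 ABC(4-6) by simp_all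
  moreover obtain x y where xy: "x \<in> centre" "y \<in> centre" "(x, y) \<noteq> (0, 0)" "X = Tsub sc U lam x y"
    using X by (rule Tregulus_memE)
  ultimately have "tvec x y u1 \<in> L"
    using line_contains_fibre[OF L_span] 1 2 3 by blast
  then show "meets sc L X"
    using meetsI[OF tvec_nonzero[OF 1(5,6) xy(3)] _ Tsub_subspace[OF xy(1,2)]] span2_subspace
      L_span 1(5) xy(4)
    by (simp add: tvecI)
qed

lemma span2_lam_line:
  assumes a: "a \<in> U" "a \<noteq> 0"
  shows "span2 a (lam a) \<in> lines sc" "meets sc (span2 a (lam a)) U"
    "meets sc (span2 a (lam a)) U'" "meets sc (span2 a (lam a)) (Tsub sc U lam 1 1)"
proof -
  have la: "lam a \<in> U'" "lam a \<noteq> 0"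
    using a by (simp_all add: lam_in_U' lam_eq_0_iff)
  have not_in: "a \<notin> U'" "lam a \<notin> U"
    using a la U_inter_U' by blast+
  then have a_neq: "a \<noteq> lam a"
    using la(1) by auto
  have "lspan sc {lam a} \<subseteq> U'" "lspan sc {a} \<subseteq> U"
    using la a by (simp_all add: lspan_least U_subspace U'_subspace)
  then have "lindep_free sc {a, lam a}"
    using not_in a_neq by (auto simp: lindep_free_def insert_Diff_if)
  then show "span2 a (lam a) \<in> lines sc"
    unfolding lines_def lspan_pair[symmetric] using a_neq by blast
  have "a = sc 1 a + sc 0 (lam a)" "lam a = sc 0 a + sc 1 (lam a)"
    "tvec 1 1 a = sc 1 a + sc 1 (lam a)"
    by (simp_all add: tvec_def)
  then have "a \<in> span2 a (lam a)" "lam a \<in> span2 a (lam a)" "tvec 1 1 a \<in> span2 a (lam a)"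
    by (metis span2I)+
  then show "meets sc (span2 a (lam a)) U" "meets sc (span2 a (lam a)) U'"
    "meets sc (span2 a (lam a)) (Tsub sc U lam 1 1)"
    using meetsI[OF a(2) span2_subspace U_subspace _ a(1)]
      meetsI[OF la(2) span2_subspace U'_subspace _ la(1)]
      meetsI[OF tvec_nonzero[OF a, of 1 1] span2_subspace Tsub_subspace _ tvecI[OF a(1)]]
    by simp_all
qed

context
  fixes X :: "'v set"
  assumes X_subspace: "lsubspace sc X" and X_inter_U': "X \<inter> U' \<subseteq> {0}"
begin

lemma graph_coefficient_independent:
  assumes graph: "\<And>a. a \<in> U \<Longrightarrow> a \<noteq> 0 \<Longrightarrow> \<exists>c. a + sc c (lam a) \<in> X"
    and ab: "a \<in> U" "b \<in> U" "independent2 a b"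
    and X: "a + sc c (lam a) \<in> X" "b + sc c' (lam b) \<in> X"
  shows "c = c'"
proof -
  have "a + b \<noteq> 0"
    using ab(3)[unfolded independent2_def, rule_format, of 1 1] by auto
  then obtain c'' where c'': "(a + b) + sc c'' (lam (a + b)) \<in> X"
    using graph ab(1,2) by (meson subspace_add U_subspace)
  define r where "r = sc (c'' - c) a + sc (c'' - c') b"
  have r: "r \<in> U"
    using ab by (simp add: r_def subspace_add subspace_scale U_subspace)
  have "lam r = sc (c'' - c) (lam a) + sc (c'' - c') (lam b)"
    using ab by (simp add: r_def lam_add lam_scale subspace_scale U_subspace)
  also have "\<dots> = ((a + b) + sc c'' (lam (a + b))) - (a + sc c (lam a)) - (b + sc c' (lam b))"
    using ab by (simp add: lam_add scale_right_distrib scale_left_diff_distrib algebra_simps)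
  also have "\<dots> \<in> X"
    using c'' X by (intro subspace_diff[OF X_subspace])
  finally have "lam r = 0"
    using X_inter_U' r lam_in_U' by blast
  then have "sc (c'' - c) a + sc (c'' - c') b = 0"
    using r by (simp add: lam_eq_0_iff r_def)
  then show ?thesis
    using ab(3) unfolding independent2_def by (metis right_minus_eq)
qed

lemma graph_coefficient_constant:
  assumes dim: "dim_gt2 sc" and graph: "\<And>a. a \<in> U \<Longrightarrow> a \<noteq> 0 \<Longrightarrow> \<exists>c. a + sc c (lam a) \<in> X"
  obtains c where "\<And>a. a \<in> U \<Longrightarrow> a + sc c (lam a) \<in> X"
proof -
  have shared: "c = c'"
    if "a \<in> U" "b \<in> U" "independent2 a b" "a + sc c (lam a) \<in> X" "b + sc c' (lam b) \<in> X"
    for a b c c'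
    by (rule graph_coefficient_independent[of a b c c']) (use graph that in auto)
  obtain a0 where a0: "a0 \<in> U" "a0 \<noteq> 0"
    using dim by (rule U_nonzero)
  obtain c0 where c0: "a0 + sc c0 (lam a0) \<in> X"
    using graph a0 by blast
  have "a + sc c0 (lam a) \<in> X" if a: "a \<in> U" for a
  proof (cases "a = 0")
    case True
    then show ?thesis
      using X_subspace by (simp add: subspace_zero)
  next
    case False
    obtain c where c: "a + sc c (lam a) \<in> X"
      using graph a False by blast
    obtain b where b: "b \<in> U" "independent2 a b"
      using U_independent[OF dim a False] by blast
    obtain c' where c': "b + sc c' (lam b) \<in> X"
      using graph b(1) independent2_nonzero(2)[OF b(2)] by blast
    have "c = c0"
    proof (cases "independent2 a a0")
      case True
      then show ?thesis
        using shared a a0(1) c c0 by blast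
    next
      case False
      then obtain k where k: "a0 = sc k a"
        using \<open>a \<noteq> 0\<close> by (rule not_independent2_multiple)
      moreover have "k \<noteq> 0"
        using k a0(2) by auto
      ultimately have "independent2 a0 b"
        using b(2) by (simp add: independent2_scale_left)
      then show ?thesis
        using shared[OF a b c c'] shared[OF a0(1) b(1) _ c0 c'] by simp
    qed
    then show ?thesis
      using c by simp
  qed
  then show ?thesis
    using that by blast
qed

lemma graph_coefficient_central:
  assumes a0: "a0 \<in> U" "a0 \<noteq> 0" and graph: "\<And>a. a \<in> U \<Longrightarrow> a + sc c (lam a) \<in> X"
  shows "c \<in> centre"
proof -
  have "c * k = k * c" for k
  proof -
    \<comment> \<open>both vectors lie in \<open>X\<close> over the same point \<open>k a0\<close> of \<open>U\<close>\<close>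
    have "sc k a0 + sc (c * k) (lam a0) \<in> X"
      using graph[of "sc k a0"] a0(1) by (simp add: lam_scale scale_scale subspace_scale U_subspace)
    moreover have "sc k a0 + sc (k * c) (lam a0) \<in> X"
      using subspace_scale[OF X_subspace graph[OF a0(1)], of k]
      by (simp add: scale_right_distrib scale_scale)
    ultimately have "sc (c * k - k * c) (lam a0) \<in> X"
      using subspace_diff[OF X_subspace] by (fastforce simp: scale_left_diff_distrib)
    then have "sc (c * k - k * c) (lam a0) = 0"
      using X_inter_U' a0(1) by (auto simp: lam_in_U' subspace_scale U'_subspace)
    then show ?thesis
      using a0 by (simp add: scale_eq_0_iff lam_eq_0_iff)
  qed
  then show ?thesis
    by (simp add: centre_def)
qed

lemma graph_eq_Tsub_one:
  assumes graph: "\<And>a. a \<in> U \<Longrightarrow> a + sc c (lam a) \<in> X"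
  shows "X = Tsub sc U lam 1 c"
proof
  show "Tsub sc U lam 1 c \<subseteq> X"
    using graph by (auto simp: Tsub_eq_image tvec_def)
  show "X \<subseteq> Tsub sc U lam 1 c"
  proof
    fix v assume v: "v \<in> X"
    obtain p q where pq: "p \<in> U" "q \<in> U'" "v = p + q"
      by (rule U_decompose)
    have "q - sc c (lam p) = v - tvec 1 c p"
      using pq by (simp add: tvec_def)
    also have "\<dots> \<in> X"
      using v graph[OF pq(1)] by (simp add: tvec_def subspace_diff X_subspace)
    finally have "q - sc c (lam p) = 0"
      using X_inter_U' pq by (auto simp: lam_in_U' subspace_scale subspace_diff U'_subspace)
    then have "v = tvec 1 c p"
      using pq by (simp add: tvec_def)
    then show "v \<in> Tsub sc U lam 1 c"
      using pq(1) by (simp add: tvecI)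
  qed
qed

lemma graph_point_exists:
  assumes dim: "dim_gt2 sc" and S: "R2 sc S" "U \<in> S" "U' \<in> S" "Tsub sc U lam 1 1 \<in> S" "X \<in> S"
    and a: "a \<in> U" "a \<noteq> 0"
  obtains c where "a + sc c (lam a) \<in> X"
proof -
  have "meets sc (span2 a (lam a)) X"
    using S Tregulus_distinct[OF dim] span2_lam_line[OF a] unfolding R2_def by blast
  then obtain p where p: "p \<noteq> 0" "p \<in> span2 a (lam a)" "p \<in> X"
    by (rule meetsE)
  then obtain s t where st: "p = sc s a + sc t (lam a)"
    unfolding span2_def by blast
  have "s \<noteq> 0"
  proof
    assume "s = 0"
    then have "p \<in> U'"
      using st a(1) by (simp add: lam_in_U' subspace_scale U'_subspace)
    then show False
      using p X_inter_U' by blast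
  qed
  then have "sc (inverse s) p = a + sc (inverse s * t) (lam a)"
    using st by (simp add: scale_right_distrib scale_scale)
  moreover have "sc (inverse s) p \<in> X"
    using p by (simp add: subspace_scale X_subspace)
  ultimately show ?thesis
    using that by simp
qed

end

lemma Tregulus_maximal:
  assumes dim: "dim_gt2 sc" and S: "Tregulus \<subset> S" "S \<subseteq> Gset sc" "R1 sc S" "R2 sc S"
  shows False
proof -
  obtain X where X: "X \<in> S" "X \<notin> Tregulus"
    using S(1) by blast
  have X_subspace: "lsubspace sc X"
    using X(1) S(2) by (auto simp: Gset_def iso_quot_def)
  have in_S: "U \<in> S" "U' \<in> S" "Tsub sc U lam 1 1 \<in> S"
    using S(1) U_in_Tregulus U'_in_Tregulus Tsub_one_one_in_Tregulus by blast+
  have "X \<noteq> U'"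
    using X(2) U'_in_Tregulus by blast
  then have "distant sc X U'"
    using S(3) X(1) in_S(2) unfolding R1_def by blast
  then have X_inter_U': "X \<inter> U' \<subseteq> {0}"
    by (simp add: distant_def)
  obtain c where c: "\<And>a. a \<in> U \<Longrightarrow> a + sc c (lam a) \<in> X"
    using graph_coefficient_constant[OF X_subspace X_inter_U' dim]
      graph_point_exists[OF X_subspace X_inter_U' dim S(4) in_S X(1)] by metis
  obtain a0 where "a0 \<in> U" "a0 \<noteq> 0"
    using dim by (rule U_nonzero)
  then have "c \<in> centre"
    using graph_coefficient_central[OF X_subspace X_inter_U'] c by blast
  then have "X \<in> Tregulus"
    using graph_eq_Tsub_one[OF X_subspace X_inter_U' c] Tregulus_memI[of 1 c] by simp
  then show False
    using X(2) by blast
qed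

lemma Tregulus_Z_regulus:
  assumes "dim_gt2 sc"
  shows "Z_regulus sc Tregulus"
  unfolding Z_regulus_def
  using Tregulus_subset_Gset Tregulus_R1[OF assms] Tregulus_R2[OF assms] Tregulus_maximal[OF assms]
  by blast

end

section \<open>The chain\<close>

lemma actK_Zsub_one_zero: "actK M (Zsub 1 0) = Zsub (fst (fst M)) (snd (fst M))"
  unfolding actK_def Zsub_def rowmulK_def by force

lemma GL2Z_first_row:
  fixes x y :: "'k::division_ring"
  assumes c: "x \<in> centre" "y \<in> centre" and nz: "(x, y) \<noteq> (0, 0)"
  obtains M where "M \<in> GL2Z" "fst M = (x, y)"
proof (cases "x = 0")
  case False
  show ?thesis
  proof (rule that[of "((x, y), (0, 1))"])
    show "((x, y), (0, 1)) \<in> GL2Z"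
      unfolding GL2Z_def
    proof (intro CollectI conjI exI[of _ "((inverse x, - (inverse x * y)), (0, 1))"])
      show "mat_entries ((x, y), (0, 1)) \<subseteq> centre"
        "mat_entries ((inverse x, - (inverse x * y)), (0, 1)) \<subseteq> centre"
        using c by (auto simp: mat_entries_def centre_mult centre_inverse centre_uminus)
      show "matmulK ((x, y), (0, 1)) ((inverse x, - (inverse x * y)), (0, 1)) = ((1, 0), (0, 1))"
        "matmulK ((inverse x, - (inverse x * y)), (0, 1)) ((x, y), (0, 1)) = ((1, 0), (0, 1))"
        using False by (simp_all add: matmulK_def rowmulK_def flip: mult.assoc)
    qed
  qed simp
next
  case True
  then have "y \<noteq> 0"
    using nz by simp
  show ?thesis
  proof (rule that[of "((0, y), (1, 0))"])
    show "((0, y), (1, 0)) \<in> GL2Z"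
      unfolding GL2Z_def
    proof (intro CollectI conjI exI[of _ "((0, 1), (inverse y, 0))"])
      show "mat_entries ((0, y), (1, 0)) \<subseteq> centre" "mat_entries ((0, 1), (inverse y, 0)) \<subseteq> centre"
        using c by (auto simp: mat_entries_def centre_inverse)
      show "matmulK ((0, y), (1, 0)) ((0, 1), (inverse y, 0)) = ((1, 0), (0, 1))"
        "matmulK ((0, 1), (inverse y, 0)) ((0, y), (1, 0)) = ((1, 0), (0, 1))"
        using \<open>y \<noteq> 0\<close> by (simp_all add: matmulK_def rowmulK_def)
    qed
  qed (simp add: True)
qed

lemma Zsub_in_projZ_iff:
  fixes x y :: "'k::division_ring"
  assumes c: "x \<in> centre" "y \<in> centre"
  shows "Zsub x y \<in> projZ \<longleftrightarrow> (x, y) \<noteq> (0, 0)"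
proof
  assume "Zsub x y \<in> projZ"
  then obtain M :: "('k \<times> 'k) \<times> ('k \<times> 'k)"
    where M: "M \<in> GL2Z" "Zsub x y = Zsub (fst (fst M)) (snd (fst M))"
    unfolding projZ_def actK_Zsub_one_zero by blast
  obtain N where N: "matmulK M N = ((1, 0), (0, 1))"
    using M(1) unfolding GL2Z_def by blast
  have "fst M \<noteq> (0, 0)"
    using N by (auto simp: matmulK_def rowmulK_def)
  moreover have "fst M \<in> Zsub x y"
    unfolding M(2) unfolding Zsub_def by (rule CollectI, rule exI[of _ 1]) (simp add: prod_eq_iff)
  ultimately show "(x, y) \<noteq> (0, 0)"
    unfolding Zsub_def by auto
next
  assume "(x, y) \<noteq> (0, 0)"
  with c obtain M where "M \<in> GL2Z" "fst M = (x, y)"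
    by (rule GL2Z_first_row)
  then have "M \<in> GL2Z" "Zsub x y = actK M (Zsub 1 0)"
    by (simp_all add: actK_Zsub_one_zero)
  then show "Zsub x y \<in> projZ"
    unfolding projZ_def by blast
qed

context distant_pair
begin

lemma End_apply_in_U: "f \<in> End sc U \<Longrightarrow> f v \<in> U"
  using zero_in_U unfolding End_def by (cases "v \<in> U") auto

lemma rid_End: "rid U \<in> End sc U"
  and rzero_End: "rzero \<in> End sc U"
  and rscal_End: "x \<in> centre \<Longrightarrow> rscal sc U x \<in> End sc U"
  unfolding End_def linear_on_def rid_def rzero_def rscal_def
  by (auto simp: subspace_add subspace_scale U_subspace scale_right_distrib scale_scale centre_commute)

lemma End_zero:
  assumes "f \<in> End sc U"
  shows "f 0 = 0"
proof -
  have "\<forall>a. \<forall>x\<in>U. f (sc a x) = sc a (f x)"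
    using assms by (simp add: End_def linear_on_def)
  then have "f (sc 0 0) = sc 0 (f 0)"
    using zero_in_U by blast
  then show ?thesis by simp
qed

lemma rmul_rid: "f \<in> End sc U \<Longrightarrow> rmul (rid U) f = f"
  using End_zero[of f] unfolding rmul_def rid_def End_def by (auto simp: fun_eq_iff)

lemma Rsub_self:
  assumes "\<alpha> \<in> End sc U" "\<beta> \<in> End sc U"
  shows "(\<alpha>, \<beta>) \<in> Rsub sc U \<alpha> \<beta>"
proof -
  have "(\<alpha>, \<beta>) = (rmul (rid U) \<alpha>, rmul (rid U) \<beta>)"
    using assms by (simp add: rmul_rid)
  then show ?thesis
    unfolding Rsub_def using rid_End by blast
qed

lemma Phi_image_mono:
  assumes "\<alpha> \<in> End sc U" "\<beta> \<in> End sc U" "(\<alpha>', \<beta>') \<in> Rsub sc U \<alpha> \<beta>"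
  shows "{\<alpha>' u + lam (\<beta>' u) | u. u \<in> U} \<subseteq> {\<alpha> u + lam (\<beta> u) | u. u \<in> U}"
proof -
  obtain \<rho> where "\<rho> \<in> End sc U" "\<alpha>' = rmul \<rho> \<alpha>" "\<beta>' = rmul \<rho> \<beta>"
    using assms(3) unfolding Rsub_def by blast
  then show ?thesis
    unfolding rmul_def by (auto intro: End_apply_in_U)
qed

lemma Phi_Rsub:
  assumes "\<alpha> \<in> End sc U" "\<beta> \<in> End sc U"
  shows "Phi sc U lam (Rsub sc U \<alpha> \<beta>) = {\<alpha> u + lam (\<beta> u) | u. u \<in> U}"
  unfolding Phi_def
proof (rule the_equality)
  fix X
  assume "\<exists>\<alpha>' \<beta>'. \<alpha>' \<in> End sc U \<and> \<beta>' \<in> End sc U \<and> Rsub sc U \<alpha> \<beta> = Rsub sc U \<alpha>' \<beta>' \<and>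
    X = {\<alpha>' u + lam (\<beta>' u) | u. u \<in> U}"
  then obtain \<alpha>' \<beta>' where \<alpha>'\<beta>': "\<alpha>' \<in> End sc U" "\<beta>' \<in> End sc U"
    "Rsub sc U \<alpha> \<beta> = Rsub sc U \<alpha>' \<beta>'" "X = {\<alpha>' u + lam (\<beta>' u) | u. u \<in> U}"
    by blast
  have "(\<alpha>', \<beta>') \<in> Rsub sc U \<alpha> \<beta>" "(\<alpha>, \<beta>) \<in> Rsub sc U \<alpha>' \<beta>'"
    using Rsub_self assms \<alpha>'\<beta>'(1-3) by metis+
  then show "X = {\<alpha> u + lam (\<beta> u) | u. u \<in> U}"
    using Phi_image_mono assms \<alpha>'\<beta>' by (simp add: subset_antisym)
qed (use assms in blast)

lemma Phi_Rsub_rscal: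
  assumes "x \<in> centre" "y \<in> centre"
  shows "Phi sc U lam (Rsub sc U (rscal sc U x) (rscal sc U y)) = Tsub sc U lam x y"
  using assms by (simp add: Phi_Rsub rscal_End) (auto simp: Tsub_def rscal_def lam_scale)

definition idmatR :: "(('v \<Rightarrow> 'v) \<times> ('v \<Rightarrow> 'v)) \<times> (('v \<Rightarrow> 'v) \<times> ('v \<Rightarrow> 'v))" where
  "idmatR = ((rid U, rzero), (rzero, rid U))"

lemma rowmulR_idmatR: "(\<And>v. f v \<in> U) \<Longrightarrow> (\<And>v. g v \<in> U) \<Longrightarrow> rowmulR (f, g) idmatR = (f, g)"
  unfolding idmatR_def rowmulR_def radd_def rmul_def rid_def rzero_def by (auto simp: fun_eq_iff)

lemma idmatR_GL2R: "idmatR \<in> GL2R sc U"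
proof -
  have "mat_entries idmatR \<subseteq> End sc U"
    unfolding mat_entries_def idmatR_def using rid_End rzero_End by auto
  moreover have "matmulR idmatR idmatR = idmatR"
    unfolding matmulR_def idmatR_def rowmulR_def radd_def rmul_def rid_def rzero_def
    by (auto simp: fun_eq_iff)
  ultimately show ?thesis
    unfolding GL2R_def idmatR_def by auto
qed

lemma actR_idmatR_Rsub:
  assumes "\<alpha> \<in> End sc U" "\<beta> \<in> End sc U"
  shows "actR idmatR (Rsub sc U \<alpha> \<beta>) = Rsub sc U \<alpha> \<beta>"
proof -
  have "rowmulR p idmatR = p" if p: "p \<in> Rsub sc U \<alpha> \<beta>" for p
  proof -
    obtain \<rho> where "\<rho> \<in> End sc U" "p = (rmul \<rho> \<alpha>, rmul \<rho> \<beta>)"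
      using p unfolding Rsub_def by blast
    then show ?thesis
      using assms by (simp add: rowmulR_idmatR rmul_def End_apply_in_U)
  qed
  then show ?thesis
    unfolding actR_def by simp
qed

lemma Tregulus_Phi_Zchain: "\<exists>C\<in>Zchains sc U. Tregulus = Phi sc U lam ` C"
proof
  show "actR idmatR ` embZ sc U \<in> Zchains sc U"
    unfolding Zchains_def using idmatR_GL2R by blast
  have Phi_chain: "Phi sc U lam (actR idmatR (Rsub sc U (rscal sc U x) (rscal sc U y))) = Tsub sc U lam x y"
    if "x \<in> centre" "y \<in> centre" for x y
    using that by (simp add: actR_idmatR_Rsub rscal_End Phi_Rsub_rscal)
  show "Tregulus = Phi sc U lam ` actR idmatR ` embZ sc U"
  proof
    show "Tregulus \<subseteq> Phi sc U lam ` actR idmatR ` embZ sc U"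
    proof
      fix X assume "X \<in> Tregulus"
      then obtain x y where xy: "x \<in> centre" "y \<in> centre" "(x, y) \<noteq> (0, 0)" "X = Tsub sc U lam x y"
        by (rule Tregulus_memE)
      then have "Rsub sc U (rscal sc U x) (rscal sc U y) \<in> embZ sc U"
        unfolding embZ_def using Zsub_in_projZ_iff by blast
      then show "X \<in> Phi sc U lam ` actR idmatR ` embZ sc U"
        using Phi_chain[OF xy(1,2)] xy(4) by blast
    qed
    show "Phi sc U lam ` actR idmatR ` embZ sc U \<subseteq> Tregulus"
    proof
      fix X assume "X \<in> Phi sc U lam ` actR idmatR ` embZ sc U"
      then obtain x y where xy: "x \<in> centre" "y \<in> centre" "Zsub x y \<in> projZ"
        "X = Phi sc U lam (actR idmatR (Rsub sc U (rscal sc U x) (rscal sc U y)))"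
        unfolding embZ_def by blast
      moreover have "(x, y) \<noteq> (0, 0)"
        using Zsub_in_projZ_iff[OF xy(1,2)] xy(3) by blast
      ultimately show "X \<in> Tregulus"
        using Phi_chain[OF xy(1,2)] Tregulus_memI[OF xy(1,2)] by simp
    qed
  qed
qed

end

theorem proposition4p4:
  fixes sc :: "'k::division_ring \<Rightarrow> 'v::ab_group_add \<Rightarrow> 'v"
    and U U' :: "'v set" and lam :: "'v \<Rightarrow> 'v"
  assumes "left_vs sc" and "dim_gt2 sc"
    and "U \<in> Gset sc" and "U' \<in> Gset sc" and "distant sc U U'"
    and "linear_on sc U lam" and "bij_betw lam U U'"
  shows "(\<exists>C\<in>Zchains sc U.
            {Tsub sc U lam x y | x y. x \<in> centre \<and> y \<in> centre \<and> (x, y) \<noteq> (0, 0)} = Phi sc U lam ` C)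
       \<and> Z_regulus sc {Tsub sc U lam x y | x y. x \<in> centre \<and> y \<in> centre \<and> (x, y) \<noteq> (0, 0)}"
proof -
  interpret distant_pair sc U U' lam
    using assms by unfold_locales (simp_all add: left_vector_space_def)
  show ?thesis
    using Tregulus_Phi_Zchain Tregulus_Z_regulus[OF assms(2)] unfolding Tregulus_def by blast
qed

end
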